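(* Let $I$ be a countable index set and $(M_i)_{i\in I}$ countable $L$-structures, and let $M=\prod_{i\in I}M_i$, viewed as a two-sorted structure in the Feferman–Vaught language: one sort is the product $\prod_i M_i$, the other is the Boolean algebra $\mathcal P(I)$ with its Boolean operations, and for each $L$-formula $\phi(x_1,\dots,x_n)$ there is a function $[\phi]:(\prod_i M_i)^n\to\mathcal P(I)$ with $[\phi](a_1,\dots,a_n)=\{i\in I: M_i\models\phi(a_1(i),\dots,a_n(i))\}$. Equip $\prod_i M_i$ with the product topology of the discrete spaces $M_i$ (a Polish space). Then every equivalence relation on $(\prod_i M_i)^n$ that is definable without parameters in this structure is smooth.
   Context: An equivalence relation $E$ on a standard Borel space $Z$ is smooth if there is a Borel map $\theta$ from $Z$ into a Polish space with $x\,E\,y\iff\theta(x)=\theta(y)$. *)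

theory Defs
  imports "HOL-Analysis.Analysis"
begin

definition Polish_space :: "'a topology \<Rightarrow> bool" where
  "Polish_space X \<longleftrightarrow> completely_metrizable_space X \<and> separable_space X"

definition borel_of :: "'a topology \<Rightarrow> 'a measure" where
  "borel_of X = sigma (topspace X) {U. openin X U}"

text \<open>The Polish target
  space is taken to live on the type real; since every Polish space has cardinality at
  most the continuum it can be transported onto a subset of real, so this is no loss.\<close>
definition smooth_rel :: "'a topology \<Rightarrow> ('a \<times> 'a) set \<Rightarrow> bool" where
  "smooth_rel X E \<longleftrightarrow>
     (\<exists>(Y :: real topology) \<theta>. Polish_space Y \<and>
        \<theta> \<in> borel_of X \<rightarrow>\<^sub>M borel_of Y \<and>
        (\<forall>x\<in>topspace X. \<forall>y\<in>topspace X. (x, y) \<in> E \<longleftrightarrow> \<theta> x = \<theta> y))"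

datatype 'f trm = Var nat | Fn 'f "'f trm list"

datatype ('f, 'r) fm =
    Falsum
  | Equal "'f trm" "'f trm"
  | Rel 'r "'f trm list"
  | Neg "('f, 'r) fm"
  | Conj "('f, 'r) fm" "('f, 'r) fm"
  | Exi nat "('f, 'r) fm"

record ('f, 'r, 'a) lstruct =
  dom :: "'a set"
  fun_int :: "'f \<Rightarrow> 'a list \<Rightarrow> 'a"
  rel_int :: "'r \<Rightarrow> 'a list \<Rightarrow> bool"

definition is_lstruct :: "('f, 'r, 'a) lstruct \<Rightarrow> bool" where
  "is_lstruct M \<longleftrightarrow> dom M \<noteq> {} \<and>
     (\<forall>f xs. set xs \<subseteq> dom M \<longrightarrow> fun_int M f xs \<in> dom M)"

fun evalt :: "('f, 'r, 'a) lstruct \<Rightarrow> (nat \<Rightarrow> 'a) \<Rightarrow> 'f trm \<Rightarrow> 'a" where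
  "evalt M e (Var k) = e k"
| "evalt M e (Fn f ts) = fun_int M f (map (evalt M e) ts)"

fun lsat :: "('f, 'r, 'a) lstruct \<Rightarrow> (nat \<Rightarrow> 'a) \<Rightarrow> ('f, 'r) fm \<Rightarrow> bool" where
  "lsat M e Falsum = False"
| "lsat M e (Equal s t) = (evalt M e s = evalt M e t)"
| "lsat M e (Rel r ts) = rel_int M r (map (evalt M e) ts)"
| "lsat M e (Neg \<phi>) = (\<not> lsat M e \<phi>)"
| "lsat M e (Conj \<phi> \<psi>) = (lsat M e \<phi> \<and> lsat M e \<psi>)"
| "lsat M e (Exi k \<phi>) = (\<exists>x\<in>dom M. lsat M (e(k := x)) \<phi>)"

fun fvt :: "'f trm \<Rightarrow> nat set" where
  "fvt (Var k) = {k}"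
| "fvt (Fn f ts) = (\<Union>t\<in>set ts. fvt t)"

fun fv :: "('f, 'r) fm \<Rightarrow> nat set" where
  "fv Falsum = {}"
| "fv (Equal s t) = fvt s \<union> fvt t"
| "fv (Rel r ts) = (\<Union>t\<in>set ts. fvt t)"
| "fv (Neg \<phi>) = fv \<phi>"
| "fv (Conj \<phi> \<psi>) = fv \<phi> \<union> fv \<psi>"
| "fv (Exi k \<phi>) = fv \<phi> - {k}"

text \<open>Sort P (the product) has only variables; sort B (the Boolean algebra P(I)) has
  variables, the Boolean operations, and the function symbols [phi] applied to P-variables.\<close>
datatype ('f, 'r) bterm =
    BVar nat
  | BZero
  | BOne
  | BUn "('f, 'r) bterm" "('f, 'r) bterm"
  | BInt "('f, 'r) bterm" "('f, 'r) bterm"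
  | BCompl "('f, 'r) bterm"
  | Br "('f, 'r) fm" "nat list"

datatype ('f, 'r) fvfm =
    FFalse
  | PEq nat nat
  | BEq "('f, 'r) bterm" "('f, 'r) bterm"
  | FNeg "('f, 'r) fvfm"
  | FConj "('f, 'r) fvfm" "('f, 'r) fvfm"
  | PEx nat "('f, 'r) fvfm"
  | BEx nat "('f, 'r) fvfm"

text \<open>The product carrier, with index set I = UNIV :: 'i set.\<close>
definition prod_carrier :: "('i \<Rightarrow> ('f, 'r, 'a) lstruct) \<Rightarrow> ('i \<Rightarrow> 'a) set" where
  "prod_carrier M = (\<Pi>\<^sub>E i\<in>UNIV. dom (M i))"

text \<open>Evaluation of B-terms; [phi](a_1,...,a_n) = {i. M_i |= phi(a_1(i),...,a_n(i))},
  where the k-th variable of phi is interpreted by the k-th argument.\<close>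
fun bval :: "('i \<Rightarrow> ('f, 'r, 'a) lstruct) \<Rightarrow> (nat \<Rightarrow> 'i \<Rightarrow> 'a) \<Rightarrow> (nat \<Rightarrow> 'i set)
              \<Rightarrow> ('f, 'r) bterm \<Rightarrow> 'i set" where
  "bval M \<sigma> \<beta> (BVar k) = \<beta> k"
| "bval M \<sigma> \<beta> BZero = {}"
| "bval M \<sigma> \<beta> BOne = UNIV"
| "bval M \<sigma> \<beta> (BUn s t) = bval M \<sigma> \<beta> s \<union> bval M \<sigma> \<beta> t"
| "bval M \<sigma> \<beta> (BInt s t) = bval M \<sigma> \<beta> s \<inter> bval M \<sigma> \<beta> t"
| "bval M \<sigma> \<beta> (BCompl s) = - bval M \<sigma> \<beta> s"
| "bval M \<sigma> \<beta> (Br \<phi> vs) =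
     {i. lsat (M i) (\<lambda>k. if k < length vs then \<sigma> (vs ! k) i else undefined) \<phi>}"

fun fvsat :: "('i \<Rightarrow> ('f, 'r, 'a) lstruct) \<Rightarrow> (nat \<Rightarrow> 'i \<Rightarrow> 'a) \<Rightarrow> (nat \<Rightarrow> 'i set)
              \<Rightarrow> ('f, 'r) fvfm \<Rightarrow> bool" where
  "fvsat M \<sigma> \<beta> FFalse = False"
| "fvsat M \<sigma> \<beta> (PEq j k) = (\<sigma> j = \<sigma> k)"
| "fvsat M \<sigma> \<beta> (BEq s t) = (bval M \<sigma> \<beta> s = bval M \<sigma> \<beta> t)"
| "fvsat M \<sigma> \<beta> (FNeg \<psi>) = (\<not> fvsat M \<sigma> \<beta> \<psi>)"
| "fvsat M \<sigma> \<beta> (FConj \<psi> \<xi>) = (fvsat M \<sigma> \<beta> \<psi> \<and> fvsat M \<sigma> \<beta> \<xi>)"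
| "fvsat M \<sigma> \<beta> (PEx k \<psi>) = (\<exists>a\<in>prod_carrier M. fvsat M (\<sigma>(k := a)) \<beta> \<psi>)"
| "fvsat M \<sigma> \<beta> (BEx k \<psi>) = (\<exists>S. fvsat M \<sigma> (\<beta>(k := S)) \<psi>)"

fun wf_bterm :: "('f, 'r) bterm \<Rightarrow> bool" where
  "wf_bterm (BUn s t) = (wf_bterm s \<and> wf_bterm t)"
| "wf_bterm (BInt s t) = (wf_bterm s \<and> wf_bterm t)"
| "wf_bterm (BCompl s) = wf_bterm s"
| "wf_bterm (Br \<phi> vs) = (fv \<phi> \<subseteq> {..<length vs})"
| "wf_bterm _ = True"

fun wf_fvfm :: "('f, 'r) fvfm \<Rightarrow> bool" where
  "wf_fvfm (BEq s t) = (wf_bterm s \<and> wf_bterm t)"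
| "wf_fvfm (FNeg \<psi>) = wf_fvfm \<psi>"
| "wf_fvfm (FConj \<psi> \<xi>) = (wf_fvfm \<psi> \<and> wf_fvfm \<xi>)"
| "wf_fvfm (PEx k \<psi>) = wf_fvfm \<psi>"
| "wf_fvfm (BEx k \<psi>) = wf_fvfm \<psi>"
| "wf_fvfm _ = True"

fun pfv_bterm :: "('f, 'r) bterm \<Rightarrow> nat set" where
  "pfv_bterm (BUn s t) = pfv_bterm s \<union> pfv_bterm t"
| "pfv_bterm (BInt s t) = pfv_bterm s \<union> pfv_bterm t"
| "pfv_bterm (BCompl s) = pfv_bterm s"
| "pfv_bterm (Br \<phi> vs) = set vs"
| "pfv_bterm _ = {}"

fun bfv_bterm :: "('f, 'r) bterm \<Rightarrow> nat set" where
  "bfv_bterm (BVar k) = {k}"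
| "bfv_bterm (BUn s t) = bfv_bterm s \<union> bfv_bterm t"
| "bfv_bterm (BInt s t) = bfv_bterm s \<union> bfv_bterm t"
| "bfv_bterm (BCompl s) = bfv_bterm s"
| "bfv_bterm _ = {}"

fun pfv :: "('f, 'r) fvfm \<Rightarrow> nat set" where
  "pfv FFalse = {}"
| "pfv (PEq j k) = {j, k}"
| "pfv (BEq s t) = pfv_bterm s \<union> pfv_bterm t"
| "pfv (FNeg \<psi>) = pfv \<psi>"
| "pfv (FConj \<psi> \<xi>) = pfv \<psi> \<union> pfv \<xi>"
| "pfv (PEx k \<psi>) = pfv \<psi> - {k}"
| "pfv (BEx k \<psi>) = pfv \<psi>"

fun bfv :: "('f, 'r) fvfm \<Rightarrow> nat set" where
  "bfv FFalse = {}"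
| "bfv (PEq j k) = {}"
| "bfv (BEq s t) = bfv_bterm s \<union> bfv_bterm t"
| "bfv (FNeg \<psi>) = bfv \<psi>"
| "bfv (FConj \<psi> \<xi>) = bfv \<psi> \<union> bfv \<xi>"
| "bfv (PEx k \<psi>) = bfv \<psi>"
| "bfv (BEx k \<psi>) = bfv \<psi> - {k}"

definition tuples :: "('i \<Rightarrow> ('f, 'r, 'a) lstruct) \<Rightarrow> nat \<Rightarrow> (nat \<Rightarrow> 'i \<Rightarrow> 'a) set" where
  "tuples M n = (\<Pi>\<^sub>E k\<in>{..<n}. prod_carrier M)"

text \<open>The binary relation on n-tuples defined by psi, where the P-variables 0..n-1 stand
  for the first tuple and n..2n-1 for the second.  (For a parameter-free psi whose free
  variables are among these, the B-variable assignment is irrelevant.)\<close>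
definition defined_rel ::
  "('i \<Rightarrow> ('f, 'r, 'a) lstruct) \<Rightarrow> nat \<Rightarrow> ('f, 'r) fvfm
     \<Rightarrow> ((nat \<Rightarrow> 'i \<Rightarrow> 'a) \<times> (nat \<Rightarrow> 'i \<Rightarrow> 'a)) set" where
  "defined_rel M n \<psi> =
     {(a, b). a \<in> tuples M n \<and> b \<in> tuples M n \<and>
        fvsat M (\<lambda>k. if k < n then a k else b (k - n)) (\<lambda>_. {}) \<psi>}"

definition FV_definable_rel ::
  "('i \<Rightarrow> ('f, 'r, 'a) lstruct) \<Rightarrow> nat
     \<Rightarrow> ((nat \<Rightarrow> 'i \<Rightarrow> 'a) \<times> (nat \<Rightarrow> 'i \<Rightarrow> 'a)) set \<Rightarrow> bool" where
  "FV_definable_rel M n E \<longleftrightarrow>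
     (\<exists>\<psi>. wf_fvfm \<psi> \<and> pfv \<psi> \<subseteq> {..<2 * n} \<and> bfv \<psi> = {} \<and> E = defined_rel M n \<psi>)"

definition prod_top :: "('i \<Rightarrow> ('f, 'r, 'a) lstruct) \<Rightarrow> ('i \<Rightarrow> 'a) topology" where
  "prod_top M = product_topology (\<lambda>i. discrete_topology (dom (M i))) UNIV"

definition tuple_top :: "('i \<Rightarrow> ('f, 'r, 'a) lstruct) \<Rightarrow> nat \<Rightarrow> (nat \<Rightarrow> 'i \<Rightarrow> 'a) topology" where
  "tuple_top M n = product_topology (\<lambda>_. prod_top M) {..<n}"

end

theory Submission
  imports Defs "HOL-Library.Nat_Bijection"
begin

text \<open>By a Feferman--Vaught analysis, whether a formula of the two-sorted language holds at
  given tuples of the product depends only on how many indices, up to a fixed bound, fall into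
  each class of a finite colouring computed coordinate by coordinate. These truncated counts
  are lower semicontinuous on the product of discrete spaces, so every definable set, in
  particular every equivalence class and the saturation of every basic cylinder, is a finite
  union of locally closed sets. Two disjoint nonempty sets of this kind cannot have the same
  closure, hence distinct classes are separated by the saturation of one of the countably many
  basic cylinders. These saturations are Borel, and coding membership in them as a ternary
  expansion reduces the relation to equality of reals.\<close>

section \<open>Truncated counts\<close>

definition trunc_card :: "nat \<Rightarrow> 'a set \<Rightarrow> nat" where
  "trunc_card K S = (if finite S then min K (card S) else K)"

lemma trunc_card_le: "trunc_card K S \<le> K"
  by (simp add: trunc_card_def)

lemma trunc_card_empty [simp]: "trunc_card K {} = 0"
  by (simp add: trunc_card_def)

lemma trunc_card_eq_0_iff: "trunc_card K S = 0 \<longleftrightarrow> K = 0 \<or> S = {}"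
  by (cases "finite S") (auto simp: trunc_card_def min_def split: if_splits)

lemma trunc_card_eq_bound_iff: "trunc_card K S = K \<longleftrightarrow> infinite S \<or> K \<le> card S"
  by (auto simp: trunc_card_def)

lemma trunc_card_smaller_bound: "K' \<le> K \<Longrightarrow> trunc_card K' S = min K' (trunc_card K S)"
  by (auto simp: trunc_card_def)

lemma trunc_card_eq_smaller_bound:
  "K' \<le> K \<Longrightarrow> trunc_card K A = trunc_card K B \<Longrightarrow> trunc_card K' A = trunc_card K' B"
  by (metis trunc_card_smaller_bound)

lemma card_le_trunc_card:
  "F \<subseteq> S \<Longrightarrow> finite F \<Longrightarrow> card F \<le> K \<Longrightarrow> card F \<le> trunc_card K S"
  by (auto simp: trunc_card_def intro: card_mono)

lemma obtain_subset_with_card: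
  assumes "infinite S \<or> j \<le> card S"
  obtains F where "F \<subseteq> S" "finite F" "card F = j"
  using assms infinite_arbitrarily_large obtain_subset_with_card_n
  by (metis card.infinite le_zero_eq finite.emptyI card.empty)

lemma obtain_subset_le_trunc_card:
  assumes "j \<le> trunc_card K S"
  obtains F where "F \<subseteq> S" "finite F" "card F = j"
  using assms by (cases "finite S") (auto simp: trunc_card_def intro: obtain_subset_with_card)

lemma trunc_card_Un_disjoint:
  "A \<inter> B = {} \<Longrightarrow> trunc_card K (A \<union> B) = min K (trunc_card K A + trunc_card K B)"
  by (auto simp: trunc_card_def card_Un_disjoint)

lemma trunc_card_UN_disjoint_eq:
  assumes "finite D" "disjoint_family_on X D" "disjoint_family_on Y D"
    and "\<And>d. d \<in> D \<Longrightarrow> trunc_card K (X d) = trunc_card K (Y d)"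
  shows "trunc_card K (\<Union>d\<in>D. X d) = trunc_card K (\<Union>d\<in>D. Y d)"
  using assms
proof (induction D rule: finite_induct)
  case (insert d D)
  have "X d \<inter> (\<Union>e\<in>D. X e) = {}" "Y d \<inter> (\<Union>e\<in>D. Y e) = {}"
    using insert.hyps(2) insert.prems(1,2) unfolding disjoint_family_on_def by fastforce+
  moreover have "trunc_card K (\<Union>d\<in>D. X d) = trunc_card K (\<Union>d\<in>D. Y d)"
    using insert by (auto simp: disjoint_family_on_def)
  ultimately show ?case
    using insert.prems(3) by (simp add: trunc_card_Un_disjoint)
qed simp

lemma large_Diff:
  assumes "infinite P \<or> m + card B \<le> card P" "finite B" "B \<subseteq> P"
  shows "infinite (P - B) \<or> m \<le> card (P - B)"
  using assms by (cases "finite P") (auto simp: card_Diff_subset Diff_infinite_finite)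

lemma trunc_card_split_large:
  assumes P: "infinite P \<or> K + L \<le> card P" and P': "infinite P' \<or> K + L \<le> card P'"
    and "A \<subseteq> P" and large: "infinite (P - A) \<or> L \<le> card (P - A)"
  obtains A' where "A' \<subseteq> P'" "trunc_card K A' = trunc_card K A"
    "trunc_card L (P' - A') = trunc_card L (P - A)"
proof -
  have "infinite P' \<or> trunc_card K A \<le> card P'"
    using P' trunc_card_le[of K A] by auto
  then obtain A' where A': "A' \<subseteq> P'" "finite A'" "card A' = trunc_card K A"
    by (rule obtain_subset_with_card)
  have "infinite (P' - A') \<or> L \<le> card (P' - A')"
    using large_Diff[of P' L A'] P' A' trunc_card_le[of K A] by auto
  then have "trunc_card L (P' - A') = trunc_card L (P - A)"
    using large by (auto simp: trunc_card_def)
  moreover have "trunc_card K A' = trunc_card K A"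
    using A' trunc_card_le[of K A] by (simp add: trunc_card_def)
  ultimately show ?thesis
    using that A'(1) by blast
qed

lemma trunc_card_split:
  assumes eq: "trunc_card (K + L) P = trunc_card (K + L) P'" and "A \<subseteq> P"
  obtains A' where "A' \<subseteq> P'" "trunc_card K A' = trunc_card K A"
    "trunc_card L (P' - A') = trunc_card L (P - A)"
proof (cases "finite P \<and> card P < K + L")
  case small: True
  then have P': "finite P'" "card P' = card P"
    using eq by (auto simp: trunc_card_def split: if_splits)
  have A: "finite A" "card A \<le> card P"
    using small \<open>A \<subseteq> P\<close> by (auto intro: finite_subset card_mono)
  obtain A' where A': "A' \<subseteq> P'" "finite A'" "card A' = card A"
    using obtain_subset_with_card[of P' "card A"] A P' by auto
  have "card (P' - A') = card (P - A)"
    using A' A P' small \<open>A \<subseteq> P\<close> by (simp add: card_Diff_subset)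
  then show ?thesis
    using that[of A'] A' A P' small by (auto simp: trunc_card_def)
next
  case False
  then have P: "infinite P \<or> K + L \<le> card P"
    by auto
  then have P': "infinite P' \<or> K + L \<le> card P'"
    using eq by (metis trunc_card_eq_bound_iff)
  show ?thesis
  proof (cases "infinite (P - A) \<or> L \<le> card (P - A)")
    case True
    with P P' \<open>A \<subseteq> P\<close> show ?thesis
      by (rule trunc_card_split_large[OF _ _ _ _ that])
  next
    case small: False
    have "P - (P - A) = A"
      using \<open>A \<subseteq> P\<close> by blast
    then have large: "infinite (P - (P - A)) \<or> K \<le> card (P - (P - A))"
      using large_Diff[of P K "P - A"] P small by auto
    have "infinite P \<or> L + K \<le> card P" "infinite P' \<or> L + K \<le> card P'"
      using P P' by (simp_all add: add.commute)
    then obtain B' where B': "B' \<subseteq> P'" "trunc_card L B' = trunc_card L (P - A)"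
      "trunc_card K (P' - B') = trunc_card K (P - (P - A))"
      by (rule trunc_card_split_large[OF _ _ Diff_subset large])
    moreover have "P' - (P' - B') = B'"
      using B'(1) by blast
    ultimately show ?thesis
      using that[of "P' - B'"] \<open>P - (P - A) = A\<close> by auto
  qed
qed

lemma trunc_card_transfer_colouring:
  assumes "finite C" "C \<noteq> {}" "trunc_card (K * card C) P = trunc_card (K * card C) P'"
    and "f ` P \<subseteq> C"
  shows "\<exists>g. g ` P' \<subseteq> C \<and> (\<forall>c. trunc_card K {i\<in>P'. g i = c} = trunc_card K {i\<in>P. f i = c})"
  using assms
proof (induction C arbitrary: P P' rule: finite_ne_induct)
  case (singleton c)
  then have "{i\<in>P. f i = c'} = (if c' = c then P else {})" for c'
    by auto
  then have "trunc_card K {i\<in>P'. c = c'} = trunc_card K {i\<in>P. f i = c'}" for c'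
    using singleton.prems by simp
  then show ?case
    by (intro exI[of _ "\<lambda>_. c"]) auto
next
  case (insert c C)
  define A where "A = {i\<in>P. f i = c}"
  have "trunc_card (K + K * card C) P = trunc_card (K + K * card C) P'"
    using insert by simp
  moreover have "A \<subseteq> P"
    by (auto simp: A_def)
  ultimately obtain A' where A': "A' \<subseteq> P'" "trunc_card K A' = trunc_card K A"
    "trunc_card (K * card C) (P' - A') = trunc_card (K * card C) (P - A)"
    by (rule trunc_card_split)
  have "f ` (P - A) \<subseteq> C"
    using insert.prems(2) by (auto simp: A_def)
  then obtain g where g: "g ` (P' - A') \<subseteq> C"
    "\<And>c. trunc_card K {i\<in>P' - A'. g i = c} = trunc_card K {i\<in>P - A. f i = c}"
    using insert.IH[of "P - A" "P' - A'"] A'(3) by auto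
  define g' where "g' i = (if i \<in> A' then c else g i)" for i
  have "trunc_card K {i\<in>P'. g' i = c'} = trunc_card K {i\<in>P. f i = c'}" for c'
  proof (cases "c' = c")
    case True
    then have "{i\<in>P'. g' i = c'} = A'" "{i\<in>P. f i = c'} = A"
      using A'(1) g(1) insert.hyps by (auto simp: g'_def A_def)
    then show ?thesis
      using A'(2) by simp
  next
    case False
    then have "{i\<in>P'. g' i = c'} = {i\<in>P' - A'. g i = c'}" "{i\<in>P. f i = c'} = {i\<in>P - A. f i = c'}"
      by (auto simp: g'_def A_def)
    then show ?thesis
      using g(2) by simp
  qed
  moreover have "g' ` P' \<subseteq> insert c C"
    using g(1) by (auto simp: g'_def)
  ultimately show ?case
    by blast
qed

definition same_fibre_counts :: "nat \<Rightarrow> ('i \<Rightarrow> 'c) \<Rightarrow> ('i \<Rightarrow> 'c) \<Rightarrow> bool" where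
  "same_fibre_counts K p p' \<longleftrightarrow> (\<forall>c. trunc_card K (p -` {c}) = trunc_card K (p' -` {c}))"

lemma same_fibre_counts_sym: "same_fibre_counts K p p' \<Longrightarrow> same_fibre_counts K p' p"
  by (simp add: same_fibre_counts_def)

lemma same_fibre_counts_smaller_bound:
  "K' \<le> K \<Longrightarrow> same_fibre_counts K p p' \<Longrightarrow> same_fibre_counts K' p p'"
  by (auto simp: same_fibre_counts_def intro: trunc_card_eq_smaller_bound)

lemma same_fibre_counts_comp:
  fixes p p' :: "'i \<Rightarrow> 'c"
  assumes fin: "finite (range p \<union> range p')" and same: "same_fibre_counts K p p'"
  shows "same_fibre_counts K (h \<circ> p) (h \<circ> p')"
  unfolding same_fibre_counts_def
proof
  fix u
  define Z where "Z = (range p \<union> range p') \<inter> h -` {u}"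
  have "(h \<circ> p) -` {u} = (\<Union>z\<in>Z. p -` {z})" "(h \<circ> p') -` {u} = (\<Union>z\<in>Z. p' -` {z})"
    by (auto simp: Z_def)
  moreover have "disjoint_family_on (\<lambda>z. q -` {z}) Z" for q :: "'i \<Rightarrow> 'c"
    by (auto simp: disjoint_family_on_def)
  ultimately show "trunc_card K ((h \<circ> p) -` {u}) = trunc_card K ((h \<circ> p') -` {u})"
    using fin same by (simp add: Z_def same_fibre_counts_def trunc_card_UN_disjoint_eq)
qed

text \<open>The refinement step behind quantifier elimination. The summand \<open>1\<close> in the level
  \<open>K * N + 1\<close> makes the empty colour classes of \<open>p\<close> and \<open>p'\<close> correspond.\<close>
lemma same_fibre_counts_refine:
  fixes p p' :: "'i \<Rightarrow> 'd" and f :: "'i \<Rightarrow> 'c"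
  assumes same: "same_fibre_counts (Suc (K * N)) p p'"
    and fin: "\<And>d. finite (C d)" and card: "\<And>d. card (C d) \<le> N"
    and f: "\<And>i. f i \<in> C (p i)"
  obtains f' where "\<And>i. f' i \<in> C (p' i)"
    "same_fibre_counts K (\<lambda>i. (p i, f i)) (\<lambda>i. (p' i, f' i))"
proof -
  have "\<exists>g. g ` (p' -` {d}) \<subseteq> C d \<and>
          (\<forall>c. trunc_card K {i\<in>p' -` {d}. g i = c} = trunc_card K {i\<in>p -` {d}. f i = c})" for d
  proof (cases "p -` {d} = {}")
    case True
    have "trunc_card (Suc (K * N)) (p' -` {d}) = trunc_card (Suc (K * N)) (p -` {d})"
      using same by (simp add: same_fibre_counts_def)
    then have "trunc_card (Suc (K * N)) (p' -` {d}) = 0"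
      using True by simp
    then have "p' -` {d} = {}"
      by (simp add: trunc_card_eq_0_iff)
    with True show ?thesis
      by simp
  next
    case False
    then have "C d \<noteq> {}"
      using f by blast
    have "K * card (C d) \<le> Suc (K * N)"
      using card[of d] by (simp add: le_SucI)
    then have "trunc_card (K * card (C d)) (p -` {d}) = trunc_card (K * card (C d)) (p' -` {d})"
      by (rule trunc_card_eq_smaller_bound) (use same in \<open>simp add: same_fibre_counts_def\<close>)
    moreover have "f ` (p -` {d}) \<subseteq> C d"
      using f by auto
    ultimately show ?thesis
      by (rule trunc_card_transfer_colouring[OF fin \<open>C d \<noteq> {}\<close>])
  qed
  then obtain g where "\<forall>d. g d ` (p' -` {d}) \<subseteq> C d \<and>
      (\<forall>c. trunc_card K {i\<in>p' -` {d}. g d i = c} = trunc_card K {i\<in>p -` {d}. f i = c})"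
    by (rule choice[OF allI, THEN exE])
  then have g: "\<And>d. g d ` (p' -` {d}) \<subseteq> C d"
    "\<And>d c. trunc_card K {i\<in>p' -` {d}. g d i = c} = trunc_card K {i\<in>p -` {d}. f i = c}"
    by auto
  define f' where "f' i = g (p' i) i" for i
  have "{i\<in>p' -` {d}. g d i = c} = (\<lambda>i. (p' i, f' i)) -` {(d, c)}"
    "{i\<in>p -` {d}. f i = c} = (\<lambda>i. (p i, f i)) -` {(d, c)}" for d c
    by (auto simp: f'_def)
  then have "same_fibre_counts K (\<lambda>i. (p i, f i)) (\<lambda>i. (p' i, f' i))"
    using g(2) by (auto simp: same_fibre_counts_def)
  moreover have "f' i \<in> C (p' i)" for i
    using g(1) by (auto simp: f'_def)
  ultimately show ?thesis
    using that by blast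
qed

section \<open>Count-determined properties\<close>

definition local_colour ::
  "('i \<Rightarrow> (nat \<Rightarrow> 'a) \<Rightarrow> (nat \<Rightarrow> bool) \<Rightarrow> nat) \<Rightarrow> (nat \<Rightarrow> 'i \<Rightarrow> 'a) \<Rightarrow> (nat \<Rightarrow> 'i set) \<Rightarrow> 'i \<Rightarrow> nat"
  where "local_colour T \<sigma> \<beta> i = T i (\<lambda>v. \<sigma> v i) (\<lambda>b. i \<in> \<beta> b)"

definition colours :: "('i \<Rightarrow> (nat \<Rightarrow> 'a) \<Rightarrow> (nat \<Rightarrow> bool) \<Rightarrow> nat) \<Rightarrow> nat set"
  where "colours T = {T i \<rho> w | i \<rho> w. True}"

text \<open>The combinatorial form of the Feferman--Vaught theorem: by
  \<open>count_determined_fvsat\<close>, every formula of the two-sorted language has this property.\<close>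
definition count_determined :: "((nat \<Rightarrow> 'i \<Rightarrow> 'a) \<Rightarrow> (nat \<Rightarrow> 'i set) \<Rightarrow> bool) \<Rightarrow> bool" where
  "count_determined Q \<longleftrightarrow> (\<exists>T K. finite (colours T) \<and>
     (\<forall>\<sigma> \<beta> \<sigma>' \<beta>'. same_fibre_counts K (local_colour T \<sigma> \<beta>) (local_colour T \<sigma>' \<beta>') \<longrightarrow>
        Q \<sigma> \<beta> = Q \<sigma>' \<beta>'))"

lemma colours_memI: "T i \<rho> w \<in> colours T"
  unfolding colours_def by blast

lemma local_colour_in_colours: "local_colour T \<sigma> \<beta> i \<in> colours T"
  by (simp add: local_colour_def colours_memI)

lemma range_local_colour: "range (local_colour T \<sigma> \<beta>) \<subseteq> colours T"
  by (auto simp: local_colour_in_colours)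

lemma same_fibre_counts_local_colour_comp:
  assumes "finite (colours T)"
    and "same_fibre_counts K (local_colour T \<sigma> \<beta>) (local_colour T \<sigma>' \<beta>')"
  shows "same_fibre_counts K (h \<circ> local_colour T \<sigma> \<beta>) (h \<circ> local_colour T \<sigma>' \<beta>')"
proof (rule same_fibre_counts_comp[OF _ assms(2)])
  show "finite (range (local_colour T \<sigma> \<beta>) \<union> range (local_colour T \<sigma>' \<beta>'))"
    using assms(1) range_local_colour by (metis finite_subset le_sup_iff)
qed

lemma local_colour_fun_upd:
  "local_colour T (\<sigma>(k := a)) \<beta> i = T i ((\<lambda>v. \<sigma> v i)(k := a i)) (\<lambda>b. i \<in> \<beta> b)"
  "local_colour T \<sigma> (\<beta>(k := S)) i = T i (\<lambda>v. \<sigma> v i) ((\<lambda>b. i \<in> \<beta> b)(k := i \<in> S))"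
proof -
  have "(\<lambda>v. (\<sigma>(k := a)) v i) = (\<lambda>v. \<sigma> v i)(k := a i)"
    "(\<lambda>b. i \<in> (\<beta>(k := S)) b) = (\<lambda>b. i \<in> \<beta> b)(k := i \<in> S)"
    by auto
  then show "local_colour T (\<sigma>(k := a)) \<beta> i = T i ((\<lambda>v. \<sigma> v i)(k := a i)) (\<lambda>b. i \<in> \<beta> b)"
    "local_colour T \<sigma> (\<beta>(k := S)) i = T i (\<lambda>v. \<sigma> v i) ((\<lambda>b. i \<in> \<beta> b)(k := i \<in> S))"
    by (simp_all add: local_colour_def)
qed

lemma count_determinedI:
  assumes "finite (colours T)"
    and "\<And>\<sigma> \<beta> \<sigma>' \<beta>'. same_fibre_counts K (local_colour T \<sigma> \<beta>) (local_colour T \<sigma>' \<beta>') \<Longrightarrow>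
       Q \<sigma> \<beta> \<Longrightarrow> Q \<sigma>' \<beta>'"
  shows "count_determined Q"
  unfolding count_determined_def using assms same_fibre_counts_sym by blast

lemma count_determined_cong: "count_determined Q \<Longrightarrow> (\<And>\<sigma> \<beta>. Q \<sigma> \<beta> = Q' \<sigma> \<beta>) \<Longrightarrow> count_determined Q'"
  by (metis count_determined_def)

lemma count_determined_pointwise:
  "count_determined (\<lambda>\<sigma> \<beta>. \<forall>i. P i (\<lambda>v. \<sigma> v i) (\<lambda>b. i \<in> \<beta> b))"
proof (rule count_determinedI)
  define T where "T i \<rho> w = (if P i \<rho> w then 0 else 1 :: nat)" for i \<rho> w
  show "finite (colours T)"
    by (rule finite_subset[of _ "{0, 1}"]) (auto simp: colours_def T_def)
  fix \<sigma> \<beta> \<sigma>' \<beta>'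
  assume "same_fibre_counts (Suc 0) (local_colour T \<sigma> \<beta>) (local_colour T \<sigma>' \<beta>')"
  then have "local_colour T \<sigma> \<beta> -` {1} = {} \<longleftrightarrow> local_colour T \<sigma>' \<beta>' -` {1} = {}"
    by (metis same_fibre_counts_def trunc_card_eq_0_iff nat.distinct(1))
  then show "(\<forall>i. P i (\<lambda>v. \<sigma> v i) (\<lambda>b. i \<in> \<beta> b)) \<Longrightarrow> (\<forall>i. P i (\<lambda>v. \<sigma>' v i) (\<lambda>b. i \<in> \<beta>' b))"
    by (auto simp: local_colour_def T_def split: if_splits)
qed

lemma count_determined_not: "count_determined Q \<Longrightarrow> count_determined (\<lambda>\<sigma> \<beta>. \<not> Q \<sigma> \<beta>)"
  unfolding count_determined_def by metis

lemma count_determined_conj: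
  assumes "count_determined Q1" "count_determined Q2"
  shows "count_determined (\<lambda>\<sigma> \<beta>. Q1 \<sigma> \<beta> \<and> Q2 \<sigma> \<beta>)"
proof -
  obtain T1 K1 where T1: "finite (colours T1)"
    "\<And>\<sigma> \<beta> \<sigma>' \<beta>'. same_fibre_counts K1 (local_colour T1 \<sigma> \<beta>) (local_colour T1 \<sigma>' \<beta>') \<Longrightarrow>
       Q1 \<sigma> \<beta> \<Longrightarrow> Q1 \<sigma>' \<beta>'"
    using assms(1) unfolding count_determined_def by blast
  obtain T2 K2 where T2: "finite (colours T2)"
    "\<And>\<sigma> \<beta> \<sigma>' \<beta>'. same_fibre_counts K2 (local_colour T2 \<sigma> \<beta>) (local_colour T2 \<sigma>' \<beta>') \<Longrightarrow>
       Q2 \<sigma> \<beta> \<Longrightarrow> Q2 \<sigma>' \<beta>'"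
    using assms(2) unfolding count_determined_def by blast
  define T where "T i \<rho> w = prod_encode (T1 i \<rho> w, T2 i \<rho> w)" for i \<rho> w
  have fin: "finite (colours T)"
    by (rule finite_subset[of _ "prod_encode ` (colours T1 \<times> colours T2)"])
      (use T1(1) T2(1) in \<open>auto simp: colours_def T_def\<close>)
  have T12: "local_colour T1 \<sigma> \<beta> = (fst \<circ> prod_decode) \<circ> local_colour T \<sigma> \<beta>"
    "local_colour T2 \<sigma> \<beta> = (snd \<circ> prod_decode) \<circ> local_colour T \<sigma> \<beta>" for \<sigma> \<beta>
    by (auto simp: local_colour_def T_def)
  show ?thesis
  proof (rule count_determinedI[OF fin, of "max K1 K2"])
    fix \<sigma> \<beta> \<sigma>' \<beta>'
    assume "same_fibre_counts (max K1 K2) (local_colour T \<sigma> \<beta>) (local_colour T \<sigma>' \<beta>')"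
    then have comp: "same_fibre_counts (max K1 K2) (h \<circ> local_colour T \<sigma> \<beta>) (h \<circ> local_colour T \<sigma>' \<beta>')"
      for h :: "nat \<Rightarrow> nat"
      by (rule same_fibre_counts_local_colour_comp[OF fin])
    have "same_fibre_counts K1 (local_colour T1 \<sigma> \<beta>) (local_colour T1 \<sigma>' \<beta>')"
      unfolding T12 by (rule same_fibre_counts_smaller_bound[OF max.cobounded1 comp])
    moreover have "same_fibre_counts K2 (local_colour T2 \<sigma> \<beta>) (local_colour T2 \<sigma>' \<beta>')"
      unfolding T12 by (rule same_fibre_counts_smaller_bound[OF max.cobounded2 comp])
    ultimately show "Q1 \<sigma> \<beta> \<and> Q2 \<sigma> \<beta> \<Longrightarrow> Q1 \<sigma>' \<beta>' \<and> Q2 \<sigma>' \<beta>'"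
      using T1(2) T2(2) by blast
  qed
qed

lemma count_determined_pointwise_subst:
  assumes "count_determined Q"
  shows "count_determined (\<lambda>\<sigma> \<beta>. Q (\<lambda>v i. G v i (\<lambda>w. \<sigma> w i)) (\<lambda>b. {i. H b i (\<lambda>c. i \<in> \<beta> c)}))"
proof -
  obtain T K where T: "finite (colours T)"
    "\<And>\<sigma> \<beta> \<sigma>' \<beta>'. same_fibre_counts K (local_colour T \<sigma> \<beta>) (local_colour T \<sigma>' \<beta>') \<Longrightarrow>
       Q \<sigma> \<beta> \<Longrightarrow> Q \<sigma>' \<beta>'"
    using assms unfolding count_determined_def by blast
  define T' where "T' i \<rho> w = T i (\<lambda>v. G v i \<rho>) (\<lambda>b. H b i w)" for i \<rho> w
  have "colours T' \<subseteq> colours T"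
    by (auto simp: colours_def T'_def)
  then have "finite (colours T')"
    using T(1) by (rule finite_subset)
  moreover have "local_colour T' \<sigma> \<beta> =
      local_colour T (\<lambda>v i. G v i (\<lambda>w. \<sigma> w i)) (\<lambda>b. {i. H b i (\<lambda>c. i \<in> \<beta> c)})" for \<sigma> \<beta>
    by (auto simp: local_colour_def T'_def)
  ultimately show ?thesis
    using T(2) by (intro count_determinedI) auto
qed

definition colouring_ex_set ::
  "('i \<Rightarrow> (nat \<Rightarrow> 'a) \<Rightarrow> (nat \<Rightarrow> bool) \<Rightarrow> nat) \<Rightarrow> nat \<Rightarrow> 'i \<Rightarrow> (nat \<Rightarrow> 'a) \<Rightarrow> (nat \<Rightarrow> bool) \<Rightarrow> nat"
  where "colouring_ex_set T k i \<rho> w = prod_encode (T i \<rho> (w(k := False)), T i \<rho> (w(k := True)))"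

lemma finite_colours_ex_set: "finite (colours T) \<Longrightarrow> finite (colours (colouring_ex_set T k))"
  by (rule finite_subset[of _ "prod_encode ` (colours T \<times> colours T)"])
    (auto simp: colours_def colouring_ex_set_def)

lemma same_fibre_counts_ex_set:
  assumes fin: "finite (colours T)"
    and same: "same_fibre_counts (Suc (K * card (UNIV :: bool set)))
      (local_colour (colouring_ex_set T k) \<sigma> \<beta>) (local_colour (colouring_ex_set T k) \<sigma>' \<beta>')"
  obtains S' where "same_fibre_counts K (local_colour T \<sigma> (\<beta>(k := S))) (local_colour T \<sigma>' (\<beta>'(k := S')))"
proof -
  define h where "h = (\<lambda>(d, b). (if b then snd else fst) (prod_decode d))"
  have split: "local_colour T \<sigma> (\<beta>(k := S)) = h \<circ> (\<lambda>i. (local_colour (colouring_ex_set T k) \<sigma> \<beta> i, i \<in> S))"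
    for \<sigma> \<beta> S
    by (rule ext) (simp add: h_def colouring_ex_set_def local_colour_fun_upd
        local_colour_def[of "colouring_ex_set T k"])
  obtain f' where f': "same_fibre_counts K (\<lambda>i. (local_colour (colouring_ex_set T k) \<sigma> \<beta> i, i \<in> S))
      (\<lambda>i. (local_colour (colouring_ex_set T k) \<sigma>' \<beta>' i, f' i))"
    using same_fibre_counts_refine[OF same, of "\<lambda>_. UNIV" "\<lambda>i. i \<in> S"] by auto
  have "finite (range (\<lambda>i. (local_colour (colouring_ex_set T k) \<sigma> \<beta> i, i \<in> S)) \<union>
                range (\<lambda>i. (local_colour (colouring_ex_set T k) \<sigma>' \<beta>' i, f' i)))"
    by (rule finite_subset[of _ "colours (colouring_ex_set T k) \<times> UNIV"])
      (auto simp: finite_colours_ex_set[OF fin] local_colour_in_colours)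
  from same_fibre_counts_comp[OF this f', of h]
  have "same_fibre_counts K (local_colour T \<sigma> (\<beta>(k := S))) (local_colour T \<sigma>' (\<beta>'(k := {i. f' i})))"
    by (simp add: split)
  then show ?thesis
    by (rule that)
qed

lemma count_determined_ex_set:
  assumes "count_determined Q"
  shows "count_determined (\<lambda>\<sigma> \<beta>. \<exists>S. Q \<sigma> (\<beta>(k := S)))"
proof -
  obtain T K where T: "finite (colours T)"
    "\<And>\<sigma> \<beta> \<sigma>' \<beta>'. same_fibre_counts K (local_colour T \<sigma> \<beta>) (local_colour T \<sigma>' \<beta>') \<Longrightarrow>
       Q \<sigma> \<beta> \<Longrightarrow> Q \<sigma>' \<beta>'"
    using assms unfolding count_determined_def by blast
  show ?thesis
  proof (rule count_determinedI[OF finite_colours_ex_set[OF T(1)]])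
    fix \<sigma> \<beta> \<sigma>' \<beta>'
    assume same: "same_fibre_counts (Suc (K * card (UNIV :: bool set)))
      (local_colour (colouring_ex_set T k) \<sigma> \<beta>) (local_colour (colouring_ex_set T k) \<sigma>' \<beta>')"
    assume "\<exists>S. Q \<sigma> (\<beta>(k := S))"
    then obtain S where "Q \<sigma> (\<beta>(k := S))" ..
    moreover obtain S' where
      "same_fibre_counts K (local_colour T \<sigma> (\<beta>(k := S))) (local_colour T \<sigma>' (\<beta>'(k := S')))"
      using T(1) same by (rule same_fibre_counts_ex_set)
    ultimately show "\<exists>S. Q \<sigma>' (\<beta>'(k := S))"
      using T(2) by blast
  qed
qed

definition colouring_ex_elem ::
  "('i \<Rightarrow> (nat \<Rightarrow> 'a) \<Rightarrow> (nat \<Rightarrow> bool) \<Rightarrow> nat) \<Rightarrow> nat \<Rightarrow> ('i \<Rightarrow> 'a set)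
     \<Rightarrow> 'i \<Rightarrow> (nat \<Rightarrow> 'a) \<Rightarrow> (nat \<Rightarrow> bool) \<Rightarrow> nat"
  where "colouring_ex_elem T k D i \<rho> w = set_encode ((\<lambda>u. T i (\<rho>(k := u)) w) ` D i)"

lemma finite_colours_ex_elem:
  assumes "finite (colours T)"
  shows "finite (colours (colouring_ex_elem T k D))"
    and "set_decode (local_colour (colouring_ex_elem T k D) \<sigma> \<beta> i) =
      (\<lambda>u. T i ((\<lambda>v. \<sigma> v i)(k := u)) (\<lambda>b. i \<in> \<beta> b)) ` D i"
proof -
  have sub: "(\<lambda>u. T i (\<rho>(k := u)) w) ` D i \<subseteq> colours T" for i \<rho> w
    by (auto simp: colours_memI)
  show "finite (colours (colouring_ex_elem T k D))"
    by (rule finite_subset[of _ "set_encode ` Pow (colours T)"])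
      (use assms sub in \<open>auto simp: colours_def colouring_ex_elem_def\<close>)
  show "set_decode (local_colour (colouring_ex_elem T k D) \<sigma> \<beta> i) =
      (\<lambda>u. T i ((\<lambda>v. \<sigma> v i)(k := u)) (\<lambda>b. i \<in> \<beta> b)) ` D i"
    using finite_subset[OF sub assms] by (simp add: local_colour_def colouring_ex_elem_def)
qed

text \<open>The colour of index \<open>i\<close> under \<open>colouring_ex_elem\<close> lists the colours reachable by
  varying the \<open>k\<close>-th coordinate at \<open>i\<close>; a witness on one side is transferred by choosing,
  colour class by colour class, reachable colours with the same truncated counts.\<close>
lemma same_fibre_counts_ex_elem:
  assumes fin: "finite (colours T)"
    and same: "same_fibre_counts (Suc (K * card (colours T)))
      (local_colour (colouring_ex_elem T k D) \<sigma> \<beta>) (local_colour (colouring_ex_elem T k D) \<sigma>' \<beta>')"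
    and a: "a \<in> Pi\<^sub>E UNIV D"
  obtains a' where "a' \<in> Pi\<^sub>E UNIV D"
    "same_fibre_counts K (local_colour T (\<sigma>(k := a)) \<beta>) (local_colour T (\<sigma>'(k := a')) \<beta>')"
proof -
  let ?T' = "colouring_ex_elem T k D"
  define C where "C d = set_decode d \<inter> colours T" for d
  have C: "finite (C d)" "card (C d) \<le> card (colours T)" for d
    using fin by (auto simp: C_def intro: card_mono)
  have "local_colour T (\<sigma>(k := a)) \<beta> i \<in> C (local_colour ?T' \<sigma> \<beta> i)" for i
    using a by (auto simp: C_def finite_colours_ex_elem(2)[OF fin] local_colour_fun_upd colours_memI)
  then obtain f' where f': "\<And>i. f' i \<in> C (local_colour ?T' \<sigma>' \<beta>' i)"
    "same_fibre_counts K (\<lambda>i. (local_colour ?T' \<sigma> \<beta> i, local_colour T (\<sigma>(k := a)) \<beta> i))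
       (\<lambda>i. (local_colour ?T' \<sigma>' \<beta>' i, f' i))"
    using same_fibre_counts_refine[where C = C, OF same C] by blast
  have "\<exists>u\<in>D i. T i ((\<lambda>v. \<sigma>' v i)(k := u)) (\<lambda>b. i \<in> \<beta>' b) = f' i" for i
    using f'(1)[of i] by (auto simp: C_def finite_colours_ex_elem(2)[OF fin])
  then obtain a' where a': "\<And>i. a' i \<in> D i"
    "\<And>i. T i ((\<lambda>v. \<sigma>' v i)(k := a' i)) (\<lambda>b. i \<in> \<beta>' b) = f' i"
    by metis
  have a'_colour: "local_colour T (\<sigma>'(k := a')) \<beta>' = f'"
    by (rule ext) (simp add: local_colour_fun_upd a'(2))
  have "finite (range (\<lambda>i. (local_colour ?T' \<sigma> \<beta> i, local_colour T (\<sigma>(k := a)) \<beta> i)) \<union>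
                range (\<lambda>i. (local_colour ?T' \<sigma>' \<beta>' i, f' i)))"
    by (rule finite_subset[of _ "colours ?T' \<times> colours T"])
      (use fin f'(1) in \<open>auto simp: C_def local_colour_in_colours finite_colours_ex_elem(1)\<close>)
  from same_fibre_counts_comp[OF this f'(2), of snd]
  have "same_fibre_counts K (local_colour T (\<sigma>(k := a)) \<beta>) (local_colour T (\<sigma>'(k := a')) \<beta>')"
    by (simp add: comp_def a'_colour)
  moreover have "a' \<in> Pi\<^sub>E UNIV D"
    using a'(1) by (simp add: PiE_iff)
  ultimately show ?thesis
    using that by blast
qed

lemma count_determined_ex_elem:
  assumes "count_determined Q"
  shows "count_determined (\<lambda>\<sigma> \<beta>. \<exists>a\<in>Pi\<^sub>E UNIV D. Q (\<sigma>(k := a)) \<beta>)"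
proof -
  obtain T K where T: "finite (colours T)"
    "\<And>\<sigma> \<beta> \<sigma>' \<beta>'. same_fibre_counts K (local_colour T \<sigma> \<beta>) (local_colour T \<sigma>' \<beta>') \<Longrightarrow>
       Q \<sigma> \<beta> \<Longrightarrow> Q \<sigma>' \<beta>'"
    using assms unfolding count_determined_def by blast
  show ?thesis
  proof (rule count_determinedI[OF finite_colours_ex_elem(1)[OF T(1)]])
    fix \<sigma> \<beta> \<sigma>' \<beta>'
    assume same: "same_fibre_counts (Suc (K * card (colours T)))
      (local_colour (colouring_ex_elem T k D) \<sigma> \<beta>) (local_colour (colouring_ex_elem T k D) \<sigma>' \<beta>')"
    assume "\<exists>a\<in>Pi\<^sub>E UNIV D. Q (\<sigma>(k := a)) \<beta>"
    then obtain a where a: "a \<in> Pi\<^sub>E UNIV D" "Q (\<sigma>(k := a)) \<beta>" ..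
    obtain a' where "a' \<in> Pi\<^sub>E UNIV D"
      "same_fibre_counts K (local_colour T (\<sigma>(k := a)) \<beta>) (local_colour T (\<sigma>'(k := a')) \<beta>')"
      using T(1) same a(1) by (rule same_fibre_counts_ex_elem)
    then show "\<exists>a\<in>Pi\<^sub>E UNIV D. Q (\<sigma>'(k := a)) \<beta>'"
      using T(2) a(2) by blast
  qed
qed

fun bval_at :: "('i \<Rightarrow> ('f, 'r, 'a) lstruct) \<Rightarrow> 'i \<Rightarrow> (nat \<Rightarrow> 'a) \<Rightarrow> (nat \<Rightarrow> bool)
                  \<Rightarrow> ('f, 'r) bterm \<Rightarrow> bool" where
  "bval_at M i \<rho> w (BVar k) = w k"
| "bval_at M i \<rho> w BZero = False"
| "bval_at M i \<rho> w BOne = True"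
| "bval_at M i \<rho> w (BUn s t) = (bval_at M i \<rho> w s \<or> bval_at M i \<rho> w t)"
| "bval_at M i \<rho> w (BInt s t) = (bval_at M i \<rho> w s \<and> bval_at M i \<rho> w t)"
| "bval_at M i \<rho> w (BCompl s) = (\<not> bval_at M i \<rho> w s)"
| "bval_at M i \<rho> w (Br \<phi> vs) = lsat (M i) (\<lambda>k. if k < length vs then \<rho> (vs ! k) else undefined) \<phi>"

lemma mem_bval_iff: "i \<in> bval M \<sigma> \<beta> s \<longleftrightarrow> bval_at M i (\<lambda>v. \<sigma> v i) (\<lambda>b. i \<in> \<beta> b) s"
  by (induction s) auto

theorem count_determined_fvsat: "count_determined (\<lambda>\<sigma> \<beta>. fvsat M \<sigma> \<beta> \<psi>)"
proof (induction \<psi>)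
  case FFalse
  show ?case
    by (rule count_determined_cong[OF count_determined_pointwise[of "\<lambda>_ _ _. False"]]) simp
next
  case (PEq j k)
  show ?case
    by (rule count_determined_cong[OF count_determined_pointwise[of "\<lambda>_ \<rho> _. \<rho> j = \<rho> k"]])
      (simp add: fun_eq_iff)
next
  case (BEq s t)
  show ?case
    by (rule count_determined_cong[OF count_determined_pointwise[of
          "\<lambda>i \<rho> w. bval_at M i \<rho> w s = bval_at M i \<rho> w t"]])
      (simp add: set_eq_iff mem_bval_iff)
next
  case (PEx k \<psi>)
  then show ?case
    unfolding fvsat.simps prod_carrier_def by (rule count_determined_ex_elem)
next
  case (BEx k \<psi>)
  then show ?case
    unfolding fvsat.simps by (rule count_determined_ex_set)
qed (simp_all add: count_determined_not count_determined_conj)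

definition block_upd :: "nat \<Rightarrow> nat \<Rightarrow> (nat \<Rightarrow> 'x) \<Rightarrow> (nat \<Rightarrow> 'x) \<Rightarrow> nat \<Rightarrow> 'x" where
  "block_upd m n \<sigma> z = (\<lambda>v. if m \<le> v \<and> v < m + n then z (v - m) else \<sigma> v)"

lemma block_upd_0 [simp]: "block_upd m 0 \<sigma> z = \<sigma>"
  unfolding block_upd_def by (rule ext) auto

lemma block_upd_Suc: "block_upd m (Suc n) \<sigma> (z(n := a)) = block_upd m n (\<sigma>(m + n := a)) z"
  by (auto simp: block_upd_def fun_eq_iff)

lemma ex_block_upd_Suc:
  "(\<exists>z\<in>Pi\<^sub>E {..<Suc n} (\<lambda>_. A). P (block_upd m (Suc n) \<sigma> z)) \<longleftrightarrow>
   (\<exists>a\<in>A. \<exists>z\<in>Pi\<^sub>E {..<n} (\<lambda>_. A). P (block_upd m n (\<sigma>(m + n := a)) z))"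
proof
  assume "\<exists>z\<in>Pi\<^sub>E {..<Suc n} (\<lambda>_. A). P (block_upd m (Suc n) \<sigma> z)"
  then obtain z where z: "z \<in> Pi\<^sub>E (insert n {..<n}) (\<lambda>_. A)" "P (block_upd m (Suc n) \<sigma> z)"
    by (auto simp: lessThan_Suc)
  have "z(n := undefined) \<in> Pi\<^sub>E {..<n} (\<lambda>_. A)"
    using fun_upd_in_PiE[of n "{..<n}" z] z(1) by simp
  moreover have "z n \<in> A"
    using z(1) by auto
  moreover have "block_upd m (Suc n) \<sigma> z = block_upd m n (\<sigma>(m + n := z n)) (z(n := undefined))"
    by (metis block_upd_Suc fun_upd_triv fun_upd_upd)
  ultimately show "\<exists>a\<in>A. \<exists>z\<in>Pi\<^sub>E {..<n} (\<lambda>_. A). P (block_upd m n (\<sigma>(m + n := a)) z)"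
    using z(2) by metis
next
  assume "\<exists>a\<in>A. \<exists>z\<in>Pi\<^sub>E {..<n} (\<lambda>_. A). P (block_upd m n (\<sigma>(m + n := a)) z)"
  then obtain a z where "a \<in> A" "z \<in> Pi\<^sub>E {..<n} (\<lambda>_. A)" "P (block_upd m (Suc n) \<sigma> (z(n := a)))"
    by (auto simp: block_upd_Suc)
  then show "\<exists>z\<in>Pi\<^sub>E {..<Suc n} (\<lambda>_. A). P (block_upd m (Suc n) \<sigma> z)"
    by (metis PiE_fun_upd lessThan_Suc)
qed

lemma count_determined_ex_block:
  assumes "count_determined Q"
  shows "count_determined (\<lambda>\<sigma> \<beta>. \<exists>z\<in>Pi\<^sub>E {..<n} (\<lambda>_. Pi\<^sub>E UNIV D). Q (block_upd m n \<sigma> z) \<beta>)"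
proof (induction n)
  case 0
  show ?case
    by (rule count_determined_cong[OF assms]) simp
next
  case (Suc n)
  then show ?case
    by (rule count_determined_cong[OF count_determined_ex_elem[where k = "m + n" and D = D]])
      (rule ex_block_upd_Suc[symmetric])
qed

section \<open>Constructible sets\<close>

definition constructible_in :: "'a topology \<Rightarrow> 'a set \<Rightarrow> bool" where
  "constructible_in X A \<longleftrightarrow> (\<exists>L. finite L \<and> (\<forall>p\<in>L. openin X (fst p) \<and> closedin X (snd p)) \<and>
     A = (\<Union>p\<in>L. fst p \<inter> snd p))"

lemma space_borel_of: "space (borel_of X) = topspace X"
  unfolding borel_of_def by (rule space_measure_of_conv)

lemma borel_of_open: "openin X U \<Longrightarrow> U \<in> sets (borel_of X)"
  unfolding borel_of_def by (rule in_measure_of) (auto dest: openin_subset)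

lemma borel_of_closed:
  assumes "closedin X F"
  shows "F \<in> sets (borel_of X)"
proof -
  have "space (borel_of X) - (topspace X - F) \<in> sets (borel_of X)"
    using assms by (intro sets.compl_sets borel_of_open) (simp add: openin_diff)
  moreover have "space (borel_of X) - (topspace X - F) = F"
    using assms closedin_subset space_borel_of by fastforce
  ultimately show ?thesis
    by simp
qed

lemma constructible_in_borel: "constructible_in X A \<Longrightarrow> A \<in> sets (borel_of X)"
  unfolding constructible_in_def
  by (auto intro!: sets.finite_UN sets.Int[OF borel_of_open borel_of_closed])

definition boundary_part :: "'a topology \<Rightarrow> 'a set \<times> 'a set \<Rightarrow> 'a set" where
  "boundary_part X p = X closure_of (fst p \<inter> snd p) - fst p"

lemma closedin_boundary_part: "openin X (fst p) \<Longrightarrow> closedin X (boundary_part X p)"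
  by (simp add: boundary_part_def closedin_diff)

lemma boundary_part_no_interior:
  assumes "fst p \<inter> snd p \<subseteq> C" "openin X V" "V \<inter> C \<noteq> {}"
  shows "\<not> V \<inter> C \<subseteq> boundary_part X p"
proof
  assume sub: "V \<inter> C \<subseteq> boundary_part X p"
  obtain z where "z \<in> V \<inter> C"
    using assms(3) by blast
  then have "z \<in> X closure_of (fst p \<inter> snd p)" "z \<in> V"
    using sub by (auto simp: boundary_part_def)
  then obtain w where "w \<in> fst p \<inter> snd p" "w \<in> V"
    using assms(2) unfolding in_closure_of by blast
  with assms(1) sub show False
    by (auto simp: boundary_part_def)
qed

lemma closure_minus_boundary_parts:
  assumes "finite L" "\<forall>p\<in>L. closedin X (snd p)"
    and "z \<in> X closure_of (\<Union>p\<in>L. fst p \<inter> snd p)" "z \<notin> (\<Union>p\<in>L. boundary_part X p)"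
  shows "z \<in> (\<Union>p\<in>L. fst p \<inter> snd p)"
proof -
  obtain p where p: "p \<in> L" "z \<in> X closure_of (fst p \<inter> snd p)"
    using assms(1,3) closure_of_Union[of "(\<lambda>p. fst p \<inter> snd p) ` L" X] by auto
  then have "z \<in> fst p"
    using assms(4) by (auto simp: boundary_part_def)
  moreover have "z \<in> snd p"
    using p assms(2) closure_of_minimal[of "fst p \<inter> snd p" "snd p" X] by blast
  ultimately show ?thesis
    using p(1) by blast
qed

text \<open>A relative version of the Baire property for finitely many closed sets.\<close>
lemma finite_Union_closed_no_interior:
  assumes "finite D" "\<And>E. E \<in> D \<Longrightarrow> closedin X E"
    and "\<And>E V. E \<in> D \<Longrightarrow> openin X V \<Longrightarrow> V \<inter> C \<noteq> {} \<Longrightarrow> \<not> V \<inter> C \<subseteq> E"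
    and "openin X V" "V \<inter> C \<noteq> {}"
  shows "\<not> V \<inter> C \<subseteq> \<Union>D"
  using assms
proof (induction D arbitrary: V rule: finite_induct)
  case (insert E D)
  show ?case
  proof
    assume sub: "V \<inter> C \<subseteq> \<Union>(insert E D)"
    have "closedin X E" "\<not> V \<inter> C \<subseteq> E"
      using insert.prems(1,2)[of E] insert.prems(3,4) by simp_all
    then have "openin X (V - E)" "(V - E) \<inter> C \<noteq> {}"
      using insert.prems(3) by (auto simp: openin_diff)
    moreover have "\<And>E'. E' \<in> D \<Longrightarrow> closedin X E'"
      "\<And>E' V. E' \<in> D \<Longrightarrow> openin X V \<Longrightarrow> V \<inter> C \<noteq> {} \<Longrightarrow> \<not> V \<inter> C \<subseteq> E'"
      using insert.prems(1,2) by simp_all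
    ultimately have "\<not> (V - E) \<inter> C \<subseteq> \<Union>D"
      using insert.IH by blast
    with sub show False
      by blast
  qed
qed simp

lemma constructible_in_same_closure_Int_nonempty:
  assumes A: "constructible_in X A" and B: "constructible_in X B" and "A \<noteq> {}"
    and "A \<subseteq> topspace X" "B \<subseteq> topspace X" and cl: "X closure_of A = X closure_of B"
  shows "A \<inter> B \<noteq> {}"
proof -
  obtain LA where LA: "finite LA" "\<forall>p\<in>LA. openin X (fst p) \<and> closedin X (snd p)"
    "A = (\<Union>p\<in>LA. fst p \<inter> snd p)"
    using A unfolding constructible_in_def by blast
  obtain LB where LB: "finite LB" "\<forall>p\<in>LB. openin X (fst p) \<and> closedin X (snd p)"
    "B = (\<Union>p\<in>LB. fst p \<inter> snd p)"
    using B unfolding constructible_in_def by blast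
  define C where "C = X closure_of A"
  have "A \<subseteq> C" "B \<subseteq> C"
    using closure_of_subset[OF assms(4)] closure_of_subset[OF assms(5)] by (simp_all add: C_def cl)
  have no_interior: "\<not> V \<inter> C \<subseteq> boundary_part X p"
    if "p \<in> LA \<union> LB" "openin X V" "V \<inter> C \<noteq> {}" for p V
  proof (rule boundary_part_no_interior[OF _ that(2,3)])
    show "fst p \<inter> snd p \<subseteq> C"
      using that(1) LA(3) LB(3) \<open>A \<subseteq> C\<close> \<open>B \<subseteq> C\<close> by blast
  qed
  have "\<not> topspace X \<inter> C \<subseteq> \<Union>(boundary_part X ` (LA \<union> LB))"
  proof (rule finite_Union_closed_no_interior)
    show "finite (boundary_part X ` (LA \<union> LB))"
      using LA(1) LB(1) by simp
    show "closedin X E" if "E \<in> boundary_part X ` (LA \<union> LB)" for E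
      using that LA(2) LB(2) closedin_boundary_part by blast
    show "\<not> V \<inter> C \<subseteq> E" if "E \<in> boundary_part X ` (LA \<union> LB)" "openin X V" "V \<inter> C \<noteq> {}" for E V
      using that no_interior by blast
    show "topspace X \<inter> C \<noteq> {}"
      using \<open>A \<subseteq> C\<close> assms(3,4) by blast
  qed simp
  then obtain z where z: "z \<in> C" "z \<notin> (\<Union>p\<in>LA \<union> LB. boundary_part X p)"
    by blast
  have "z \<in> A"
    using closure_minus_boundary_parts[of LA X z] LA z by (simp add: C_def)
  moreover have "z \<in> B"
    using closure_minus_boundary_parts[of LB X z] LB z by (simp add: C_def cl)
  ultimately show ?thesis
    by blast
qed

lemma constructible_in_UN:
  assumes "finite I" "\<And>i. i \<in> I \<Longrightarrow> constructible_in X (A i)"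
  shows "constructible_in X (\<Union>i\<in>I. A i)"
proof -
  have "\<forall>i\<in>I. \<exists>L. finite L \<and> (\<forall>p\<in>L. openin X (fst p) \<and> closedin X (snd p)) \<and>
      A i = (\<Union>p\<in>L. fst p \<inter> snd p)"
    using assms(2) unfolding constructible_in_def by blast
  then obtain L where L: "\<forall>i\<in>I. finite (L i) \<and> (\<forall>p\<in>L i. openin X (fst p) \<and> closedin X (snd p)) \<and>
      A i = (\<Union>p\<in>L i. fst p \<inter> snd p)"
    by (rule bchoice[THEN exE])
  then have "(\<Union>i\<in>I. A i) = (\<Union>p\<in>(\<Union>i\<in>I. L i). fst p \<inter> snd p)"
    by auto
  with assms(1) L show ?thesis
    unfolding constructible_in_def by (intro exI[of _ "\<Union>i\<in>I. L i"]) auto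
qed

lemma constructible_in_level_set:
  fixes \<phi> :: "'c \<Rightarrow> 'a \<Rightarrow> nat"
  assumes "finite R" and up_open: "\<And>c j. c \<in> R \<Longrightarrow> openin X {x \<in> topspace X. j \<le> \<phi> c x}"
  shows "constructible_in X {x \<in> topspace X. \<forall>c\<in>R. \<phi> c x = w c}"
proof -
  define U where "U = (\<Inter>c\<in>R. {x \<in> topspace X. w c \<le> \<phi> c x}) \<inter> topspace X"
  define F where "F = topspace X - (\<Union>c\<in>R. {x \<in> topspace X. Suc (w c) \<le> \<phi> c x})"
  have "openin X U" "closedin X F"
    using assms by (auto simp: U_def F_def intro!: openin_INT closedin_diff openin_Union)
  moreover have "{x \<in> topspace X. \<forall>c\<in>R. \<phi> c x = w c} = U \<inter> F"
    by (auto simp: U_def F_def not_less_eq_eq intro: order.antisym)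
  ultimately show ?thesis
    unfolding constructible_in_def by (intro exI[of _ "{(U, F)}"]) auto
qed

lemma constructible_in_count_invariant:
  fixes \<phi> :: "'c \<Rightarrow> 'a \<Rightarrow> nat"
  assumes "finite R"
    and up_open: "\<And>c j. c \<in> R \<Longrightarrow> openin X {x \<in> topspace X. j \<le> \<phi> c x}"
    and bounded: "\<And>c x. c \<in> R \<Longrightarrow> \<phi> c x \<le> K"
    and "S \<subseteq> topspace X"
    and invariant: "\<And>x y. x \<in> S \<Longrightarrow> y \<in> topspace X \<Longrightarrow> (\<And>c. c \<in> R \<Longrightarrow> \<phi> c y = \<phi> c x) \<Longrightarrow> y \<in> S"
  shows "constructible_in X S"
proof -
  define W where "W = (\<lambda>x. restrict (\<lambda>c. \<phi> c x) R) ` S"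
  have "W \<subseteq> Pi\<^sub>E R (\<lambda>_. {..K})"
    using bounded by (auto simp: W_def)
  then have "finite W"
    using \<open>finite R\<close> by (rule finite_subset[OF _ finite_PiE]) simp
  then have "constructible_in X (\<Union>w\<in>W. {x \<in> topspace X. \<forall>c\<in>R. \<phi> c x = w c})"
    by (rule constructible_in_UN) (rule constructible_in_level_set[OF \<open>finite R\<close> up_open])
  moreover have "S = (\<Union>w\<in>W. {x \<in> topspace X. \<forall>c\<in>R. \<phi> c x = w c})"
  proof
    show "S \<subseteq> (\<Union>w\<in>W. {x \<in> topspace X. \<forall>c\<in>R. \<phi> c x = w c})"
    proof
      fix x
      assume "x \<in> S"
      then show "x \<in> (\<Union>w\<in>W. {x \<in> topspace X. \<forall>c\<in>R. \<phi> c x = w c})"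
        using \<open>S \<subseteq> topspace X\<close> by (intro UN_I[of "restrict (\<lambda>c. \<phi> c x) R"]) (auto simp: W_def)
    qed
    show "(\<Union>w\<in>W. {x \<in> topspace X. \<forall>c\<in>R. \<phi> c x = w c}) \<subseteq> S"
      using invariant by (auto simp: W_def)
  qed
  ultimately show ?thesis
    by simp
qed

lemma topspace_tuple_top: "topspace (tuple_top M n) = tuples M n"
  by (simp add: tuple_top_def prod_top_def tuples_def prod_carrier_def)

lemma tuples_in_dom: "x \<in> tuples M n \<Longrightarrow> k < n \<Longrightarrow> x k i \<in> dom (M i)"
  by (auto simp: tuples_def prod_carrier_def PiE_iff)

lemma tuples_undefined: "x \<in> tuples M n \<Longrightarrow> \<not> k < n \<Longrightarrow> x k = undefined"
  by (auto simp: tuples_def PiE_iff extensional_def)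

lemma continuous_map_tuple_coordinate:
  assumes "k < n"
  shows "continuous_map (tuple_top M n) (discrete_topology (dom (M i))) (\<lambda>z. z k i)"
proof -
  have "continuous_map (tuple_top M n) (prod_top M) (\<lambda>z. z k)"
    using assms continuous_map_product_projection[of k "{..<n}" "\<lambda>_. prod_top M"]
    by (simp add: tuple_top_def)
  moreover have "continuous_map (prod_top M) (discrete_topology (dom (M i))) (\<lambda>f. f i)"
    using continuous_map_product_projection[of i UNIV "\<lambda>i. discrete_topology (dom (M i))"]
    by (simp add: prod_top_def)
  ultimately show ?thesis
    using continuous_map_compose by (fastforce simp: o_def)
qed

definition cylinder :: "('i \<Rightarrow> ('f, 'r, 'a) lstruct) \<Rightarrow> nat \<Rightarrow> 'i set \<Rightarrow> (nat \<Rightarrow> 'i \<Rightarrow> 'a)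
                          \<Rightarrow> (nat \<Rightarrow> 'i \<Rightarrow> 'a) set" where
  "cylinder M n F x = {z \<in> tuples M n. \<forall>k<n. \<forall>i\<in>F. z k i = x k i}"

lemma cylinder_center: "x \<in> tuples M n \<Longrightarrow> x \<in> cylinder M n F x"
  by (simp add: cylinder_def)

lemma openin_cylinder:
  assumes "finite F" "x \<in> tuples M n"
  shows "openin (tuple_top M n) (cylinder M n F x)"
proof -
  define S where "S p = {z \<in> topspace (tuple_top M n). z (fst p) (snd p) \<in> {x (fst p) (snd p)}}"
    for p
  have "openin (tuple_top M n) (S p)" if "p \<in> {..<n} \<times> F" for p
    using that tuples_in_dom[OF assms(2)] unfolding S_def
    by (intro openin_continuous_map_preimage[OF continuous_map_tuple_coordinate]) auto
  then have "openin (tuple_top M n) ((\<Inter>p\<in>{..<n} \<times> F. S p) \<inter> topspace (tuple_top M n))"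
    using assms(1) by (intro openin_INT) auto
  moreover have "(\<Inter>p\<in>{..<n} \<times> F. S p) \<inter> topspace (tuple_top M n) = cylinder M n F x"
    by (auto simp: S_def cylinder_def topspace_tuple_top)
  ultimately show ?thesis
    by simp
qed

lemma prod_top_open_contains_cylinder:
  assumes "openin (prod_top M) U" "f \<in> U"
  obtains F where "finite F" "{g \<in> prod_carrier M. \<forall>i\<in>F. g i = f i} \<subseteq> U"
proof -
  have "\<exists>W. finite {i \<in> UNIV. W i \<noteq> topspace (discrete_topology (dom (M i)))} \<and>
      (\<forall>i\<in>UNIV. openin (discrete_topology (dom (M i))) (W i)) \<and> f \<in> Pi\<^sub>E UNIV W \<and> Pi\<^sub>E UNIV W \<subseteq> U"
    using assms(1) assms(2) unfolding prod_top_def openin_product_topology_alt by (rule bspec)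
  then obtain W where "finite {i \<in> UNIV. W i \<noteq> topspace (discrete_topology (dom (M i)))}"
    "f \<in> Pi\<^sub>E UNIV W" "Pi\<^sub>E UNIV W \<subseteq> U"
    by blast
  then have W: "finite {i. W i \<noteq> dom (M i)}" "f \<in> Pi\<^sub>E UNIV W" "Pi\<^sub>E UNIV W \<subseteq> U"
    by simp_all
  have "g \<in> Pi\<^sub>E UNIV W" if "g \<in> prod_carrier M" "\<forall>i\<in>{i. W i \<noteq> dom (M i)}. g i = f i" for g
  proof -
    have "g i \<in> W i" for i
      using that W(2) by (cases "W i = dom (M i)") (auto simp: prod_carrier_def PiE_iff)
    then show ?thesis
      by (simp add: PiE_iff)
  qed
  then show ?thesis
    using that[OF W(1)] W(3) by blast
qed

lemma tuple_top_open_contains_cylinder: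
  assumes "openin (tuple_top M n) V" "x \<in> V"
  obtains F where "finite F" "cylinder M n F x \<subseteq> V"
proof -
  have "\<exists>U. finite {k \<in> {..<n}. U k \<noteq> topspace (prod_top M)} \<and>
      (\<forall>k\<in>{..<n}. openin (prod_top M) (U k)) \<and> x \<in> Pi\<^sub>E {..<n} U \<and> Pi\<^sub>E {..<n} U \<subseteq> V"
    using assms(1) assms(2) unfolding tuple_top_def openin_product_topology_alt by (rule bspec)
  then obtain U where U: "\<forall>k\<in>{..<n}. openin (prod_top M) (U k)" "x \<in> Pi\<^sub>E {..<n} U"
    "Pi\<^sub>E {..<n} U \<subseteq> V"
    by blast
  have "\<forall>k\<in>{..<n}. \<exists>F. finite F \<and> {g \<in> prod_carrier M. \<forall>i\<in>F. g i = x k i} \<subseteq> U k"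
  proof
    fix k
    assume "k \<in> {..<n}"
    then have "openin (prod_top M) (U k)" "x k \<in> U k"
      using U(1,2) by (auto simp: PiE_iff)
    then obtain F where "finite F" "{g \<in> prod_carrier M. \<forall>i\<in>F. g i = x k i} \<subseteq> U k"
      by (rule prod_top_open_contains_cylinder)
    then show "\<exists>F. finite F \<and> {g \<in> prod_carrier M. \<forall>i\<in>F. g i = x k i} \<subseteq> U k"
      by blast
  qed
  then obtain F where F: "\<forall>k\<in>{..<n}. finite (F k) \<and> {g \<in> prod_carrier M. \<forall>i\<in>F k. g i = x k i} \<subseteq> U k"
    by (rule bchoice[THEN exE])
  have "cylinder M n (\<Union>k<n. F k) x \<subseteq> Pi\<^sub>E {..<n} U"
  proof
    fix z
    assume z: "z \<in> cylinder M n (\<Union>k<n. F k) x"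
    have "z k \<in> U k" if "k < n" for k
    proof -
      have "z k \<in> prod_carrier M" "\<forall>i\<in>F k. z k i = x k i"
        using z that by (auto simp: cylinder_def tuples_def)
      then show ?thesis
        using F that by blast
    qed
    then show "z \<in> Pi\<^sub>E {..<n} U"
      using z tuples_undefined by (auto simp: cylinder_def PiE_iff extensional_def)
  qed
  then show ?thesis
    using that[of "\<Union>k<n. F k"] F U(3) by blast
qed

lemma local_colour_vimage_eq_empty: "c \<notin> colours T \<Longrightarrow> local_colour T \<sigma> \<beta> -` {c} = {}"
  using local_colour_in_colours by fastforce

lemma openin_trunc_card_ge:
  assumes local: "\<And>x y i. x \<in> tuples M n \<Longrightarrow> y \<in> tuples M n \<Longrightarrow> \<forall>k<n. x k i = y k i \<Longrightarrow>
      (\<lambda>v. emb x v i) = (\<lambda>v. emb y v i)"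
  shows "openin (tuple_top M n)
    {x \<in> tuples M n. j \<le> trunc_card K (local_colour T (emb x) \<beta> -` {c})}"
  (is "openin _ ?G")
  unfolding openin_subopen[of _ ?G]
proof
  fix x
  assume "x \<in> ?G"
  then have x: "x \<in> tuples M n" "j \<le> trunc_card K (local_colour T (emb x) \<beta> -` {c})"
    by auto
  obtain F where F: "F \<subseteq> local_colour T (emb x) \<beta> -` {c}" "finite F" "card F = j"
    using x(2) by (rule obtain_subset_le_trunc_card)
  have "j \<le> K"
    using x(2) trunc_card_le order_trans by blast
  have "cylinder M n F x \<subseteq> ?G"
  proof
    fix z
    assume z: "z \<in> cylinder M n F x"
    then have "local_colour T (emb z) \<beta> i = local_colour T (emb x) \<beta> i" if "i \<in> F" for i
      using local[of z x i] that x(1) by (auto simp: cylinder_def local_colour_def)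
    then have "F \<subseteq> local_colour T (emb z) \<beta> -` {c}"
      using F(1) by auto
    then have "j \<le> trunc_card K (local_colour T (emb z) \<beta> -` {c})"
      using F(2,3) \<open>j \<le> K\<close> card_le_trunc_card by blast
    then show "z \<in> ?G"
      using z by (simp add: cylinder_def)
  qed
  then show "\<exists>U. openin (tuple_top M n) U \<and> x \<in> U \<and> U \<subseteq> ?G"
    using openin_cylinder[OF F(2) x(1)] cylinder_center[OF x(1)] by blast
qed

lemma constructible_in_count_determined:
  assumes "count_determined Q"
    and local: "\<And>x y i. x \<in> tuples M n \<Longrightarrow> y \<in> tuples M n \<Longrightarrow> \<forall>k<n. x k i = y k i \<Longrightarrow>
      (\<lambda>v. emb x v i) = (\<lambda>v. emb y v i)"
  shows "constructible_in (tuple_top M n) {x \<in> tuples M n. Q (emb x) \<beta>}"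
proof -
  obtain T K where T: "finite (colours T)"
    "\<And>\<sigma> \<beta> \<sigma>' \<beta>'. same_fibre_counts K (local_colour T \<sigma> \<beta>) (local_colour T \<sigma>' \<beta>') \<Longrightarrow>
       Q \<sigma> \<beta> \<Longrightarrow> Q \<sigma>' \<beta>'"
    using assms(1) unfolding count_determined_def by blast
  show ?thesis
  proof (rule constructible_in_count_invariant[where R = "colours T" and K = K and
        \<phi> = "\<lambda>c x. trunc_card K (local_colour T (emb x) \<beta> -` {c})"])
    fix x y
    assume x: "x \<in> {x \<in> tuples M n. Q (emb x) \<beta>}" and y: "y \<in> topspace (tuple_top M n)"
      and counts: "\<And>c. c \<in> colours T \<Longrightarrow> trunc_card K (local_colour T (emb y) \<beta> -` {c}) =
        trunc_card K (local_colour T (emb x) \<beta> -` {c})"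
    have "same_fibre_counts K (local_colour T (emb x) \<beta>) (local_colour T (emb y) \<beta>)"
      unfolding same_fibre_counts_def
      by (metis counts local_colour_vimage_eq_empty)
    then show "y \<in> {x \<in> tuples M n. Q (emb x) \<beta>}"
      using T(2) x y by (auto simp: topspace_tuple_top)
  next
    show "openin (tuple_top M n) {x \<in> topspace (tuple_top M n).
        j \<le> trunc_card K (local_colour T (emb x) \<beta> -` {c})}" for c j
      unfolding topspace_tuple_top using local by (rule openin_trunc_card_ge)
  qed (auto simp: T(1) topspace_tuple_top trunc_card_le)
qed

definition basic_cylinders :: "('i \<Rightarrow> ('f, 'r, 'a) lstruct) \<Rightarrow> nat \<Rightarrow> (nat \<Rightarrow> 'i \<Rightarrow> 'a) set set" where
  "basic_cylinders M n = {cylinder M n F x | F x. finite F \<and> x \<in> tuples M n}"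

lemma countable_basic_cylinders:
  fixes M :: "'i::countable \<Rightarrow> ('f, 'r, 'a) lstruct"
  assumes "\<And>i. countable (dom (M i))"
  shows "countable (basic_cylinders M n)"
proof -
  define cyl where "cyl Fg = {z \<in> tuples M n. \<forall>k<n. \<forall>i\<in>fst Fg. z k i = snd Fg (k, i)}"
    for Fg :: "'i set \<times> (nat \<times> 'i \<Rightarrow> 'a)"
  have "basic_cylinders M n \<subseteq>
      cyl ` (SIGMA F:{F. finite F}. Pi\<^sub>E ({..<n} \<times> F) (\<lambda>p. dom (M (snd p))))"
  proof
    fix C
    assume "C \<in> basic_cylinders M n"
    then obtain F x where C: "C = cylinder M n F x" "finite F" "x \<in> tuples M n"
      by (auto simp: basic_cylinders_def)
    define g where "g = restrict (\<lambda>p. x (fst p) (snd p)) ({..<n} \<times> F)"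
    have "g \<in> Pi\<^sub>E ({..<n} \<times> F) (\<lambda>p. dom (M (snd p)))"
      using tuples_in_dom[OF C(3)] by (auto simp: g_def)
    moreover have "C = cyl (F, g)"
      by (auto simp: C(1) cyl_def cylinder_def g_def)
    ultimately show "C \<in> cyl ` (SIGMA F:{F. finite F}. Pi\<^sub>E ({..<n} \<times> F) (\<lambda>p. dom (M (snd p))))"
      using C(2) by blast
  qed
  moreover have "countable (SIGMA F:{F. finite F}. Pi\<^sub>E ({..<n} \<times> F) (\<lambda>p. dom (M (snd p))))"
    using assms by (intro countable_SIGMA countable_Collect_finite countable_PiE) auto
  ultimately show ?thesis
    by (rule countable_subset[OF _ countable_image])
qed

definition join_tuples :: "nat \<Rightarrow> (nat \<Rightarrow> 'x) \<Rightarrow> (nat \<Rightarrow> 'x) \<Rightarrow> nat \<Rightarrow> 'x" where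
  "join_tuples n x z = (\<lambda>k. if k < n then x k else z (k - n))"

lemma defined_rel_iff:
  "(x, z) \<in> defined_rel M n \<psi> \<longleftrightarrow>
     x \<in> tuples M n \<and> z \<in> tuples M n \<and> fvsat M (join_tuples n x z) (\<lambda>_. {}) \<psi>"
  by (simp add: defined_rel_def join_tuples_def)

lemma join_tuples_local:
  assumes "x \<in> tuples M n" "y \<in> tuples M n" "\<forall>k<n. x k i = y k i"
  shows "(\<lambda>v. join_tuples n z x v i) = (\<lambda>v. join_tuples n z y v i)"
proof
  fix v
  show "join_tuples n z x v i = join_tuples n z y v i"
    using assms tuples_undefined[OF assms(1), of "v - n"] tuples_undefined[OF assms(2), of "v - n"]
    by (cases "v - n < n") (auto simp: join_tuples_def)
qed

text \<open>The saturation of a basic cylinder is again count-determined: the cylinder's index set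
  becomes a set variable and its centre a block of element variables, so that membership in the
  cylinder is a pointwise condition.\<close>
lemma constructible_in_saturation:
  fixes M :: "'i \<Rightarrow> ('f, 'r, 'a) lstruct"
  assumes "finite F" "x0 \<in> tuples M n"
  shows "constructible_in (tuple_top M n)
    {x \<in> tuples M n. \<exists>z\<in>cylinder M n F x0. fvsat M (join_tuples n x z) (\<lambda>_. {}) \<psi>}"
proof -
  define G where "G v i \<rho> = (if v < n then \<rho> v else if v < 2 * n then \<rho> (v + n) else undefined i)"
    for v and i :: 'i and \<rho> :: "nat \<Rightarrow> 'a"
  define in_cyl where "in_cyl \<rho> w \<longleftrightarrow> w 0 \<longrightarrow> (\<forall>k<n. \<rho> (2 * n + k) = \<rho> (n + k))"
    for \<rho> :: "nat \<Rightarrow> 'a" and w :: "nat \<Rightarrow> bool"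
  define Q where "Q \<sigma> \<beta> \<longleftrightarrow> (\<forall>i. in_cyl (\<lambda>v. \<sigma> v i) (\<lambda>b. i \<in> \<beta> b)) \<and>
      fvsat M (\<lambda>v i. G v i (\<lambda>w. \<sigma> w i)) (\<lambda>_. {}) \<psi>"
    for \<sigma> :: "nat \<Rightarrow> 'i \<Rightarrow> 'a" and \<beta> :: "nat \<Rightarrow> 'i set"
  have "count_determined (\<lambda>\<sigma> \<beta>. fvsat M (\<lambda>v i. G v i (\<lambda>w. \<sigma> w i)) (\<lambda>_. {}) \<psi>)"
    using count_determined_pointwise_subst[OF count_determined_fvsat, where G = G and H = "\<lambda>_ _ _. False"]
    by simp
  then have "count_determined Q"
    unfolding Q_def by (intro count_determined_conj count_determined_pointwise)
  then have det: "count_determined (\<lambda>\<sigma> \<beta>. \<exists>z\<in>Pi\<^sub>E {..<n} (\<lambda>_. prod_carrier M). Q (block_upd (2 * n) n \<sigma> z) \<beta>)"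
    unfolding prod_carrier_def by (rule count_determined_ex_block)
  define emb where "emb x v = (if v < n then x v else if v < 2 * n then x0 (v - n) else undefined)"
    for x :: "nat \<Rightarrow> 'i \<Rightarrow> 'a" and v
  from det have "constructible_in (tuple_top M n)
      {x \<in> tuples M n. \<exists>z\<in>Pi\<^sub>E {..<n} (\<lambda>_. prod_carrier M). Q (block_upd (2 * n) n (emb x) z) (\<lambda>_. F)}"
    by (rule constructible_in_count_determined) (auto simp: emb_def)
  moreover have "Q (block_upd (2 * n) n (emb x) z) (\<lambda>_. F) \<longleftrightarrow>
      z \<in> cylinder M n F x0 \<and> fvsat M (join_tuples n x z) (\<lambda>_. {}) \<psi>"
    if "z \<in> tuples M n" for x z
  proof -
    define \<sigma> where "\<sigma> = block_upd (2 * n) n (emb x) z"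
    have "(\<lambda>v i. G v i (\<lambda>w. \<sigma> w i)) = join_tuples n x z"
      using tuples_undefined[OF that]
      by (auto simp: fun_eq_iff G_def \<sigma>_def block_upd_def emb_def join_tuples_def)
    moreover have "(\<forall>i. in_cyl (\<lambda>v. \<sigma> v i) (\<lambda>b. i \<in> F)) \<longleftrightarrow> z \<in> cylinder M n F x0"
      using that by (auto simp: in_cyl_def \<sigma>_def block_upd_def emb_def cylinder_def)
    ultimately show ?thesis
      by (simp add: Q_def \<sigma>_def)
  qed
  then have "(\<exists>z\<in>Pi\<^sub>E {..<n} (\<lambda>_. prod_carrier M). Q (block_upd (2 * n) n (emb x) z) (\<lambda>_. F)) \<longleftrightarrow>
      (\<exists>z\<in>cylinder M n F x0. fvsat M (join_tuples n x z) (\<lambda>_. {}) \<psi>)" for x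
    by (auto simp: cylinder_def tuples_def)
  ultimately show ?thesis
    by simp
qed

lemma basic_cylinders_nhds_base:
  assumes "openin (tuple_top M n) V" "z \<in> V"
  shows "\<exists>C\<in>basic_cylinders M n. openin (tuple_top M n) C \<and> z \<in> C \<and> C \<subseteq> V"
proof -
  have z: "z \<in> tuples M n"
    using openin_subset[OF assms(1)] assms(2) by (auto simp: topspace_tuple_top)
  obtain F where F: "finite F" "cylinder M n F z \<subseteq> V"
    using assms by (rule tuple_top_open_contains_cylinder)
  have "cylinder M n F z \<in> basic_cylinders M n"
    using F(1) z by (auto simp: basic_cylinders_def)
  then show ?thesis
    using openin_cylinder[OF F(1) z] cylinder_center[OF z] F(2) by blast
qed

lemma constructible_in_defined_class:
  assumes "x \<in> tuples M n"
  shows "constructible_in (tuple_top M n) (defined_rel M n \<psi> `` {x})"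
proof -
  have "defined_rel M n \<psi> `` {x} = {z \<in> tuples M n. fvsat M (join_tuples n x z) (\<lambda>_. {}) \<psi>}"
    using assms by (auto simp: defined_rel_iff)
  then show ?thesis
    using constructible_in_count_determined[OF count_determined_fvsat join_tuples_local] by simp
qed

lemma constructible_in_defined_saturation:
  assumes "sym (defined_rel M n \<psi>)" "C \<in> basic_cylinders M n"
  shows "constructible_in (tuple_top M n) (defined_rel M n \<psi> `` C)"
proof -
  obtain F x0 where C: "C = cylinder M n F x0" "finite F" "x0 \<in> tuples M n"
    using assms(2) by (auto simp: basic_cylinders_def)
  have "defined_rel M n \<psi> `` C = {x. \<exists>z\<in>C. (x, z) \<in> defined_rel M n \<psi>}"
    using symD[OF assms(1)] by blast
  also have "\<dots> = {x \<in> tuples M n. \<exists>z\<in>C. fvsat M (join_tuples n x z) (\<lambda>_. {}) \<psi>}"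
    using C by (auto simp: defined_rel_iff cylinder_def)
  finally show ?thesis
    using constructible_in_saturation[OF C(2,3)] C(1) by simp
qed

section \<open>Smoothness\<close>

definition ternary_code :: "(nat \<Rightarrow> bool) \<Rightarrow> real" where
  "ternary_code p = (\<Sum>k. if p k then (1/3) ^ k else 0)"

lemma summable_ternary_digits: "summable (\<lambda>k. if p k then (1/3 :: real) ^ k else 0)"
  by (rule summable_comparison_test'[OF summable_geometric[of "1/3"], of 0]) auto

lemma ternary_code_less:
  assumes "\<forall>k<m. p k = q k" "p m" "\<not> q m"
  shows "ternary_code q < ternary_code p"
proof -
  define d where "d k = (if p k then (1/3 :: real) ^ k else 0) - (if q k then (1/3) ^ k else 0)" for k
  have sd: "summable d"
    unfolding d_def by (intro summable_diff summable_ternary_digits)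
  have geom: "summable (\<lambda>k. (1/3 :: real) ^ (k + Suc m))"
    using summable_ignore_initial_segment[OF summable_geometric[of "1/3"]] by simp
  have "ternary_code p - ternary_code q = suminf d"
    unfolding ternary_code_def d_def by (intro suminf_diff summable_ternary_digits)
  also have "\<dots> = (\<Sum>k. d (k + Suc m)) + (\<Sum>k<Suc m. d k)"
    by (rule suminf_split_initial_segment[OF sd])
  also have "(\<Sum>k<Suc m. d k) = (1/3) ^ m"
    using assms by (simp add: d_def)
  also have "(\<Sum>k. d (k + Suc m)) \<ge> - (\<Sum>k. (1/3 :: real) ^ (k + Suc m))"
    unfolding suminf_minus[OF geom, symmetric]
    by (rule suminf_le[OF _ summable_minus[OF geom] summable_ignore_initial_segment[OF sd]])
      (simp add: d_def)
  moreover have "(\<Sum>k. (1/3 :: real) ^ (k + Suc m)) = (1/3) ^ m / 2"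
  proof -
    have "(\<Sum>k. (1/3 :: real) ^ (k + Suc m)) = (\<Sum>k. (1/3) ^ Suc m * (1/3) ^ k)"
      by (simp add: power_add mult.commute)
    also have "\<dots> = (1/3) ^ Suc m * (\<Sum>k. (1/3 :: real) ^ k)"
      by (rule suminf_mult[OF summable_geometric]) simp
    also have "(\<Sum>k. (1/3 :: real) ^ k) = 3/2"
      by (subst suminf_geometric) simp_all
    finally show ?thesis
      by simp
  qed
  ultimately have "ternary_code p - ternary_code q \<ge> (1/3) ^ m - (1/3) ^ m / 2"
    by linarith
  moreover have "(1/3 :: real) ^ m > 0"
    by simp
  ultimately show ?thesis
    by linarith
qed

lemma inj_ternary_code: "inj ternary_code"
proof
  fix p q
  assume eq: "ternary_code p = ternary_code q"
  show "p = q"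
  proof (rule ccontr)
    assume "p \<noteq> q"
    then have ex: "\<exists>k. p k \<noteq> q k"
      by (auto simp: fun_eq_iff)
    define m where "m = (LEAST k. p k \<noteq> q k)"
    have "p m \<noteq> q m"
      unfolding m_def by (rule LeastI_ex[OF ex])
    moreover have "\<forall>k<m. p k = q k"
      unfolding m_def using not_less_Least by blast
    ultimately show False
      using ternary_code_less[of m p q] ternary_code_less[of m q p] eq by (cases "p m") auto
  qed
qed

lemma borel_of_euclidean: "borel_of (euclidean :: real topology) = borel"
  unfolding borel_of_def borel_def by (simp add: open_openin)

lemma Polish_space_euclidean_real: "Polish_space (euclidean :: real topology)"
  unfolding Polish_space_def separable_space_def
proof
  show "completely_metrizable_space (euclidean :: real topology)"
    by (rule completely_metrizable_space_euclidean)
  show "\<exists>C. countable C \<and> C \<subseteq> topspace euclidean \<and> euclidean closure_of C = topspace (euclidean :: real topology)"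
    by (intro exI[of _ \<rat>]) (simp add: countable_rat Rats_closure_real)
qed

lemma measurable_ternary_code:
  assumes "\<And>k. S k \<in> sets (borel_of X)"
  shows "(\<lambda>x. ternary_code (\<lambda>k. x \<in> S k)) \<in> borel_of X \<rightarrow>\<^sub>M borel_of euclidean"
  unfolding borel_of_euclidean ternary_code_def
proof (rule borel_measurable_suminf)
  fix k
  have "S k \<inter> space (borel_of X) \<in> sets (borel_of X)"
    using assms sets.sets_into_space by (simp add: Int_absorb2)
  then show "(\<lambda>x. if x \<in> S k then (1/3 :: real) ^ k else 0) \<in> borel_measurable (borel_of X)"
    by (intro measurable_If_set) simp_all
qed

lemma smooth_rel_countable_separating:
  assumes "countable \<S>" "\<And>S. S \<in> \<S> \<Longrightarrow> S \<in> sets (borel_of X)"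
    and sep: "\<And>x y. x \<in> topspace X \<Longrightarrow> y \<in> topspace X \<Longrightarrow> (x, y) \<in> E \<longleftrightarrow> (\<forall>S\<in>\<S>. x \<in> S \<longleftrightarrow> y \<in> S)"
  shows "smooth_rel X E"
proof -
  define S where "S = from_nat_into (insert {} \<S>)"
  have range_S: "range S = insert {} \<S>"
    using assms(1) by (simp add: S_def)
  have "S k \<in> insert {} \<S>" for k
    using range_S by blast
  then have "S k \<in> sets (borel_of X)" for k
    using assms(2) by (cases "S k = {}") auto
  then have "(\<lambda>x. ternary_code (\<lambda>k. x \<in> S k)) \<in> borel_of X \<rightarrow>\<^sub>M borel_of euclidean"
    by (rule measurable_ternary_code)
  moreover have "(x, y) \<in> E \<longleftrightarrow> ternary_code (\<lambda>k. x \<in> S k) = ternary_code (\<lambda>k. y \<in> S k)"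
    if "x \<in> topspace X" "y \<in> topspace X" for x y
  proof -
    have "(\<forall>T\<in>insert {} \<S>. x \<in> T \<longleftrightarrow> y \<in> T) \<longleftrightarrow> (\<forall>k. x \<in> S k \<longleftrightarrow> y \<in> S k)"
      unfolding range_S[symmetric] by blast
    then show ?thesis
      unfolding sep[OF that] inj_eq[OF inj_ternary_code] by (simp add: fun_eq_iff)
  qed
  ultimately show ?thesis
    unfolding smooth_rel_def using Polish_space_euclidean_real by blast
qed

lemma Image_equiv_iff: "equiv A E \<Longrightarrow> (x, y) \<in> E \<Longrightarrow> x \<in> E `` C \<longleftrightarrow> y \<in> E `` C"
  unfolding equiv_def sym_def trans_def by blast

lemma saturation_separates_closures:
  assumes E: "equiv (topspace X) E"
    and base: "\<And>V z. openin X V \<Longrightarrow> z \<in> V \<Longrightarrow> \<exists>C\<in>\<C>. openin X C \<and> z \<in> C \<and> C \<subseteq> V"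
    and z: "z \<in> X closure_of (E `` {x})" "z \<notin> X closure_of (E `` {y})"
  shows "\<exists>C\<in>\<C>. x \<in> E `` C \<and> y \<notin> E `` C"
proof -
  have symE: "sym E"
    using E by (simp add: equiv_def)
  obtain V where V: "openin X V" "z \<in> V" "V \<inter> E `` {y} = {}"
    using z unfolding in_closure_of by blast
  obtain C where C: "C \<in> \<C>" "openin X C" "z \<in> C" "C \<subseteq> V"
    using base[OF V(1,2)] by blast
  obtain w where "w \<in> E `` {x}" "w \<in> C"
    using z(1) C(2,3) unfolding in_closure_of by blast
  then have "x \<in> E `` C"
    using symD[OF symE] by blast
  moreover have "y \<notin> E `` C"
  proof
    assume "y \<in> E `` C"
    then obtain c where "c \<in> C" "(y, c) \<in> E"
      using symD[OF symE] by blast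
    then show False
      using V(3) C(4) by blast
  qed
  ultimately show ?thesis
    using C(1) by blast
qed

text \<open>Distinct classes are constructible, disjoint and nonempty, so they have different
  closures, which can be told apart by the saturation of a small basic open set.\<close>
lemma saturations_separate_classes:
  assumes E: "equiv (topspace X) E"
    and classes: "\<And>x. x \<in> topspace X \<Longrightarrow> constructible_in X (E `` {x})"
    and base: "\<And>V z. openin X V \<Longrightarrow> z \<in> V \<Longrightarrow> \<exists>C\<in>\<C>. openin X C \<and> z \<in> C \<and> C \<subseteq> V"
    and xy: "x \<in> topspace X" "y \<in> topspace X" "(x, y) \<notin> E"
  shows "\<exists>C\<in>\<C>. \<not> (x \<in> E `` C \<longleftrightarrow> y \<in> E `` C)"
proof -
  have "E `` {x} \<inter> E `` {y} = {}"
    using equiv_class_nondisjoint[OF E] xy(3) by blast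
  moreover have "x \<in> E `` {x}"
    using E xy(1) by (rule equiv_class_self)
  moreover have "E `` {x} \<subseteq> topspace X" "E `` {y} \<subseteq> topspace X"
    using E by (auto simp: equiv_def refl_on_def)
  ultimately have "X closure_of (E `` {x}) \<noteq> X closure_of (E `` {y})"
    using constructible_in_same_closure_Int_nonempty[OF classes[OF xy(1)] classes[OF xy(2)]] by blast
  then consider z where "z \<in> X closure_of (E `` {x})" "z \<notin> X closure_of (E `` {y})"
    | z where "z \<in> X closure_of (E `` {y})" "z \<notin> X closure_of (E `` {x})"
    by blast
  then show ?thesis
  proof cases
    case 1
    have "\<exists>C\<in>\<C>. x \<in> E `` C \<and> y \<notin> E `` C"
      by (rule saturation_separates_closures[OF E base 1])
    then show ?thesis
      by blast
  next
    case 2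
    have "\<exists>C\<in>\<C>. y \<in> E `` C \<and> x \<notin> E `` C"
      by (rule saturation_separates_closures[OF E base 2])
    then show ?thesis
      by blast
  qed
qed

lemma smooth_rel_if_constructible_classes:
  assumes equiv: "equiv (topspace X) E"
    and classes: "\<And>x. x \<in> topspace X \<Longrightarrow> constructible_in X (E `` {x})"
    and base: "\<And>V z. openin X V \<Longrightarrow> z \<in> V \<Longrightarrow> \<exists>C\<in>\<C>. openin X C \<and> z \<in> C \<and> C \<subseteq> V"
    and "countable \<C>" and borel: "\<And>C. C \<in> \<C> \<Longrightarrow> E `` C \<in> sets (borel_of X)"
  shows "smooth_rel X E"
proof (rule smooth_rel_countable_separating)
  show "countable ((``) E ` \<C>)"
    using \<open>countable \<C>\<close> by (rule countable_image)
  show "S \<in> sets (borel_of X)" if "S \<in> (``) E ` \<C>" for S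
    using that borel by blast
  fix x y
  assume xy: "x \<in> topspace X" "y \<in> topspace X"
  show "(x, y) \<in> E \<longleftrightarrow> (\<forall>S\<in>(``) E ` \<C>. x \<in> S \<longleftrightarrow> y \<in> S)"
  proof
    assume "(x, y) \<in> E"
    then show "\<forall>S\<in>(``) E ` \<C>. x \<in> S \<longleftrightarrow> y \<in> S"
      using Image_equiv_iff[OF equiv] by blast
  next
    assume same: "\<forall>S\<in>(``) E ` \<C>. x \<in> S \<longleftrightarrow> y \<in> S"
    show "(x, y) \<in> E"
    proof (rule ccontr)
      assume "(x, y) \<notin> E"
      then obtain C where "C \<in> \<C>" "\<not> (x \<in> E `` C \<longleftrightarrow> y \<in> E `` C)"
        using saturations_separate_classes[OF equiv classes base xy] by blast
      with same show False
        by blast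
    qed
  qed
qed

theorem mainTheorem20:
  fixes M :: "'i::countable \<Rightarrow> ('f, 'r, 'a) lstruct"
    and n :: nat
    and E :: "((nat \<Rightarrow> 'i \<Rightarrow> 'a) \<times> (nat \<Rightarrow> 'i \<Rightarrow> 'a)) set"
  assumes "\<And>i. is_lstruct (M i)"
    and "\<And>i. countable (dom (M i))"
    and "FV_definable_rel M n E"
    and "equiv (tuples M n) E"
  shows "smooth_rel (tuple_top M n) E"
proof -
  obtain \<psi> where E: "E = defined_rel M n \<psi>"
    using assms(3) unfolding FV_definable_rel_def by blast
  have equiv: "equiv (topspace (tuple_top M n)) E"
    using assms(4) by (simp add: topspace_tuple_top)
  then have "sym E"
    by (simp add: equiv_def)
  show ?thesis
  proof (rule smooth_rel_if_constructible_classes[OF equiv _ basic_cylinders_nhds_base])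
    show "constructible_in (tuple_top M n) (E `` {x})" if "x \<in> topspace (tuple_top M n)" for x
      using that constructible_in_defined_class by (simp add: E topspace_tuple_top)
    show "countable (basic_cylinders M n)"
      using assms(2) by (rule countable_basic_cylinders)
    show "E `` C \<in> sets (borel_of (tuple_top M n))" if "C \<in> basic_cylinders M n" for C
      using \<open>sym E\<close> that unfolding E by (intro constructible_in_borel constructible_in_defined_saturation)
  qed
qed

end
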